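(* Let $\mathbb{K}$ be an algebraically closed field of characteristic $0$, let $p\in\mathbb{K}[x,y]\setminus(\mathbb{K}[x]\cup\mathbb{K}[y])$ be irreducible with $\mathrm{F}(p)\cong\mathbb{K}$, let $r\in\mathbb{K}[x,y]_p\setminus\langle p\rangle$, and let $(f,g)\in\mathrm{F}(r,p)$. Assume the orbit $\mathcal{O}$ (on the curve $C$ associated with $p$) of some pole of $r$ is infinite. Then $\mathcal{O}$ contains a pole $(s_1,s_2)$ of $r$ such that $s_1$ is not a pole of $f$ or $s_2$ is not a pole of $g$.
   Context: $\mathbb{K}[x,y]_p$ is the set of $h\in\mathbb{K}(x,y)$ whose reduced denominator is not divisible by $p$; $\langle p\rangle=\{qp:q\in\mathbb{K}[x,y]_p\}$; $\mathrm{F}(r,p)=\{(f,g)\in\mathbb{K}(x)\times\mathbb{K}(y):f-g\in r+\langle p\rangle\}$ and $\mathrm{F}(p)=\mathrm{F}(0,p)$, a field under componentwise operations; $\mathrm{F}(p)\cong\mathbb{K}$ means it consists only of pairs of equal constants. $C\subset\mathbb{P}^1(\mathbb{K})\times\mathbb{P}^1(\mathbb{K})$ is the zero set of the bi-homogenization $x_0^{\deg_x p}y_0^{\deg_y p}p(x_1/x_0,y_1/y_0)$. Orbits are the classes of the smallest equivalence relation on $C$ with $(a,b)\sim(c,d)$ whenever $a=c$ or $b=d$. For $f\in\mathbb{K}(x)$, $s\in\mathbb{K}\cup\{\infty\}$ is a pole of $f$ if $\mathrm{m}(s,f)>0$, where $\mathrm{m}(s,f)$ is minus the valuation of $f$ as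 Laurent series in $x-s$ (resp. $x^{-1}$ if $s=\infty$); similarly for $g\in\mathbb{K}(y)$. A point $(\infty,\infty)\in C$ is a pole of $r$ if there is a Puiseux series $\varphi\in\mathbb{K}\{\{x^{-1}\}\}$ with $p(x,\varphi)=0$, $\deg\varphi>0$ and $\deg r(x,\varphi)>0$ (degree = largest exponent of $x$); a general point $(s_1,s_2)\in C$ is a pole of $r$ if, for a pair $T$ of Möbius transformations sending $(s_1,s_2)$ to $(\infty,\infty)$, $(\infty,\infty)$ is a pole of $r\circ T^{-1}$ on the curve of the numerator of $p\circ T^{-1}$. *)

theory Defs
  imports "HOL-Computational_Algebra.Computational_Algebra"
begin

text \<open>Bivariate polynomials K[x,y] are represented as 'a poly poly: the outer variable
is y, the coefficients are polynomials in x. Rational functions K(x,y) are the fraction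
field 'a poly poly fract; univariate rational functions K(x), K(y) are 'a poly fract.\<close>

definition alg_closed :: "'a::field itself \<Rightarrow> bool" where
  "alg_closed _ \<longleftrightarrow> (\<forall>q::'a poly. degree q > 0 \<longrightarrow> (\<exists>z. poly q z = 0))"

definition const_x :: "'a::field poly \<Rightarrow> 'a poly poly" where
  "const_x u = [:u:]"

definition const_y :: "'a::field poly \<Rightarrow> 'a poly poly" where
  "const_y u = map_poly (\<lambda>c. [:c:]) u"

definition emb_x :: "'a::field poly fract \<Rightarrow> 'a poly poly fract" where
  "emb_x f = (SOME R. \<exists>u v. v \<noteq> 0 \<and> f = Fract u v \<and> R = Fract (const_x u) (const_x v))"

definition emb_y :: "'a::field poly fract \<Rightarrow> 'a poly poly fract" where
  "emb_y g = (SOME R. \<exists>u v. v \<noteq> 0 \<and> g = Fract u v \<and> R = Fract (const_y u) (const_y v))"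

definition deg_x :: "'a::field poly poly \<Rightarrow> nat" where
  "deg_x p = Max (insert 0 ((\<lambda>j. degree (coeff p j)) ` {..degree p}))"

text \<open>K[x,y]_p: reduced denominator not divisible by p (p irreducible, hence prime).\<close>
definition loc :: "'a::field poly poly \<Rightarrow> 'a poly poly fract set" where
  "loc p = {h. \<exists>a b. b \<noteq> 0 \<and> h = Fract a b \<and> \<not> p dvd b}"

definition ideal_loc :: "'a::field poly poly \<Rightarrow> 'a poly poly fract set" where
  "ideal_loc p = {q * Fract p 1 | q. q \<in> loc p}"

definition FF :: "'a::field poly poly fract \<Rightarrow> 'a poly poly \<Rightarrow> ('a poly fract \<times> 'a poly fract) set" where
  "FF r p = {(f, g). emb_x f - emb_y g - r \<in> ideal_loc p}"

definition const_fract :: "'a::field \<Rightarrow> 'a poly fract" where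
  "const_fract c = Fract [:c:] 1"

text \<open>F(p) is isomorphic to K: it only contains pairs of equal constants.\<close>
definition F_trivial :: "'a::field poly poly \<Rightarrow> bool" where
  "F_trivial p \<longleftrightarrow> (\<forall>f g. (f, g) \<in> FF 0 p \<longrightarrow> (\<exists>c. f = const_fract c \<and> g = const_fract c))"

text \<open>Points of P^1(K): None is infinity; homogeneous coordinates (x0,x1).\<close>
definition hom :: "'a::field option \<Rightarrow> 'a \<times> 'a" where
  "hom s = (case s of None \<Rightarrow> (0, 1) | Some c \<Rightarrow> (1, c))"

definition bihom_eval :: "'a::field poly poly \<Rightarrow> 'a \<times> 'a \<Rightarrow> 'a \<times> 'a \<Rightarrow> 'a" where
  "bihom_eval p X Y =
     (\<Sum>j\<le>degree p. \<Sum>i\<le>deg_x p. coeff (coeff p j) i * snd X ^ i * fst X ^ (deg_x p - i)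
        * snd Y ^ j * fst Y ^ (degree p - j))"

definition curve :: "'a::field poly poly \<Rightarrow> ('a option \<times> 'a option) set" where
  "curve p = {(a, b). bihom_eval p (hom a) (hom b) = 0}"

definition orbit_rel :: "'a::field poly poly \<Rightarrow> (('a option \<times> 'a option) \<times> ('a option \<times> 'a option)) set" where
  "orbit_rel p = {(P, Q). P \<in> curve p \<and> Q \<in> curve p \<and> (fst P = fst Q \<or> snd P = snd Q)}"

definition orbit :: "'a::field poly poly \<Rightarrow> 'a option \<times> 'a option \<Rightarrow> ('a option \<times> 'a option) set" where
  "orbit p P = {Q. (P, Q) \<in> (orbit_rel p)\<^sup>*}"

definition is_pole_1 :: "'a::field poly fract \<Rightarrow> 'a option \<Rightarrow> bool" where
  "is_pole_1 f s \<longleftrightarrow> (\<exists>u v. v \<noteq> 0 \<and> u \<noteq> 0 \<and> f = Fract u v \<and>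
      (case s of None \<Rightarrow> degree u > degree v | Some c \<Rightarrow> order c v > order c u))"

definition eval2 :: "'a::field poly poly \<Rightarrow> 'a fls \<Rightarrow> 'a fls \<Rightarrow> 'a fls" where
  "eval2 q X Y = poly (map_poly (\<lambda>c. poly (map_poly fls_const c) X) q) Y"

text \<open>Inverse of the Moebius transformation sending s to infinity (identity if s = infinity,
  X \<mapsto> s + 1/X otherwise).\<close>
definition moeb_inv :: "'a::field option \<Rightarrow> 'a fls \<Rightarrow> 'a fls" where
  "moeb_inv s X = (case s of None \<Rightarrow> X | Some c \<Rightarrow> fls_const c + inverse X)"

text \<open>A Puiseux series \<phi> in K{{x^-1}} with ramification n is \<psi>(t) with t = x^(-1/n),
  \<psi> a formal Laurent series in t; then x = t^(-n). deg \<phi> > 0 iff subdegree \<psi> < 0.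
  A point (s1,s2) of C is a pole of r if after the Moebius change T, (\<infinity>,\<infinity>) is a pole
  of r \<circ> T^-1 on the curve of p \<circ> T^-1.\<close>
definition is_pole_r :: "'a::field poly poly \<Rightarrow> 'a poly poly fract \<Rightarrow> 'a option \<times> 'a option \<Rightarrow> bool" where
  "is_pole_r p r P \<longleftrightarrow> P \<in> curve p \<and>
     (\<exists>(n::nat) \<psi>. n > 0 \<and> fls_subdegree \<psi> < 0 \<and> \<psi> \<noteq> 0 \<and>
        (let X = moeb_inv (fst P) (inverse (fls_X ^ n)); Y = moeb_inv (snd P) \<psi> in
          eval2 p X Y = 0 \<and>
          (\<exists>a b. b \<noteq> 0 \<and> r = Fract a b \<and> eval2 b X Y \<noteq> 0 \<and>
              fls_subdegree (eval2 a X Y / eval2 b X Y) < 0)))"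

end

theory Submission
  imports Defs
begin

text \<open>Through every point \<open>Q = (s\<^sub>1, s\<^sub>2)\<close> of the curve passes a branch: by the
  Newton--Puiseux algorithm, applied to \<open>p\<close> in local coordinates at \<open>Q\<close>, there are Laurent series
  \<open>X\<close>, \<open>Y\<close> centred at \<open>s\<^sub>1\<close>, \<open>s\<^sub>2\<close> with \<open>p(X, Y) = 0\<close>. As \<open>p\<close> is prime and divides no
  denominator involved, the relation \<open>f - g \<in> r + \<langle>p\<rangle>\<close> specialises to
  \<open>r(X, Y) = f(X) - g(Y)\<close>. So if exactly one of \<open>f\<close> (at \<open>s\<^sub>1\<close>) and \<open>g\<close> (at \<open>s\<^sub>2\<close>) has a
  pole, then \<open>Q\<close> is a pole of \<open>r\<close>.

  If the theorem failed, then at every point of the orbit \<open>f\<close> would have a pole at \<open>s\<^sub>1\<close>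
  iff \<open>g\<close> has one at \<open>s\<^sub>2\<close>. Starting from the given pole this propagates along the horizontal
  and vertical moves generating the orbit, which therefore lies in the finite set
  \<open>poles(f) \<times> poles(g)\<close>.\<close>

lemma map_poly_hom_add:
  assumes "h 0 = 0" "\<And>x y. h (x + y) = h x + h y"
  shows "map_poly h (p + q) = map_poly h p + map_poly h q"
  by (intro poly_eqI) (simp add: assms coeff_map_poly)

lemma map_poly_hom_diff:
  fixes h :: "'a::ab_group_add \<Rightarrow> 'b::ab_group_add"
  assumes "h 0 = 0" "\<And>x y. h (x - y) = h x - h y"
  shows "map_poly h (p - q) = map_poly h p - map_poly h q"
  by (intro poly_eqI) (simp add: assms coeff_map_poly)

lemma map_poly_hom_mult:
  fixes h :: "'a::comm_semiring_0 \<Rightarrow> 'b::comm_semiring_0"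
  assumes h0: "h 0 = 0" and add: "\<And>x y. h (x + y) = h x + h y"
    and mult: "\<And>x y. h (x * y) = h x * h y"
  shows "map_poly h (p * q) = map_poly h p * map_poly h q"
proof (induction p)
  case (pCons a p)
  have "map_poly h (pCons a p * q) = map_poly h (smult a q + pCons 0 (p * q))"
    by simp
  also have "\<dots> = smult (h a) (map_poly h q) + pCons 0 (map_poly h p * map_poly h q)"
    by (simp add: map_poly_hom_add[OF h0 add] map_poly_smult[OF h0 mult]
        map_poly_pCons[of h, OF h0] pCons h0)
  also have "\<dots> = map_poly h (pCons a p) * map_poly h q"
    by (simp add: map_poly_pCons[of h, OF h0])
  finally show ?case .
qed simp

lemma map_poly_hom_pcompose:
  fixes h :: "'a::comm_semiring_1 \<Rightarrow> 'b::comm_semiring_1"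
  assumes h0: "h 0 = 0" and add: "\<And>x y. h (x + y) = h x + h y"
    and mult: "\<And>x y. h (x * y) = h x * h y"
  shows "map_poly h (pcompose p q) = pcompose (map_poly h p) (map_poly h q)"
  by (induction p) (simp_all add: pcompose_pCons map_poly_pCons[of h, OF h0]
      map_poly_hom_add[OF h0 add] map_poly_hom_mult[OF h0 add mult] h0)

lemma pcompose_power_left: "pcompose (p ^ n) q = (pcompose p q) ^ n"
  for p q :: "'a::comm_semiring_1 poly"
  by (induction n) (simp_all add: pcompose_mult pcompose_1)

lemma pcompose_monom: "pcompose (monom a j) q = smult a (q ^ j)"
  for q :: "'a::comm_semiring_1 poly"
  by (simp add: monom_altdef pcompose_smult pcompose_power_left pcompose_pCons)

lemma pcompose_eq_sum_coeff:
  fixes p :: "'a::comm_semiring_1 poly"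
  assumes "degree p \<le> N"
  shows "pcompose p q = (\<Sum>j\<le>N. smult (coeff p j) (q ^ j))"
proof -
  have "pcompose p q = pcompose (\<Sum>j\<le>N. monom (coeff p j) j) q"
    by (simp only: poly_as_sum_of_monoms'[OF assms])
  thus ?thesis by (simp add: pcompose_sum pcompose_monom)
qed

lemma smult_sum_right: "smult c (sum f A) = (\<Sum>i\<in>A. smult c (f i))"
  by (induction A rule: infinite_finite_induct) (simp_all add: smult_add_right)

lemma coeff_order_0:
  fixes q :: "'a::field poly"
  assumes "q \<noteq> 0"
  shows "\<And>k. k < order 0 q \<Longrightarrow> coeff q k = 0" "coeff q (order 0 q) \<noteq> 0"
proof -
  obtain r where r: "q = [:-0,1:] ^ order 0 q * r" "\<not> [:-0,1:] dvd r"
    using order_decomp[OF assms] by blast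
  have qr: "q = monom 1 (order 0 q) * r" using r(1) by (simp add: monom_altdef)
  have "coeff r 0 \<noteq> 0" using r(2) by (simp add: poly_eq_0_iff_dvd flip: poly_0_coeff_0)
  thus "coeff q (order 0 q) \<noteq> 0" by (subst qr) (simp add: coeff_monom_mult)
  show "\<And>k. k < order 0 q \<Longrightarrow> coeff q k = 0" by (subst qr) (simp add: coeff_monom_mult)
qed

lemma order_0_le_nonzero_coeff:
  fixes q :: "'a::field poly"
  assumes "coeff q j \<noteq> 0"
  shows "order 0 q \<le> j"
proof (rule ccontr)
  assume "\<not> order 0 q \<le> j"
  moreover have "q \<noteq> 0" using assms by auto
  ultimately show False using coeff_order_0(1)[of q j] assms by simp
qed

lemma order_0_pcompose_shift:
  fixes p :: "'a::field poly"
  assumes "p \<noteq> 0"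
  shows "order 0 (pcompose p [:c, 1:]) = order c p"
proof -
  obtain r where r: "p = [:-c,1:] ^ order c p * r" "\<not> [:-c,1:] dvd r"
    using order_decomp[OF assms] by blast
  have "pcompose [:-c, 1:] [:c, 1:] = [:0, 1:]" by (simp add: pcompose_pCons)
  hence eq: "pcompose p [:c, 1:] = [:-0, 1:] ^ order c p * pcompose r [:c, 1:]"
    by (subst r(1)) (simp add: pcompose_mult pcompose_power_left)
  have nz: "poly (pcompose r [:c, 1:]) 0 \<noteq> 0"
    using r(2) by (simp add: poly_eq_0_iff_dvd poly_pcompose)
  hence "[:-0, 1:] ^ order c p * pcompose r [:c, 1:] \<noteq> 0" by auto
  hence "order 0 (pcompose p [:c, 1:])
      = order (0::'a) ([:-0, 1:] ^ order c p) + order 0 (pcompose r [:c, 1:])"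
    using order_mult eq by metis
  also have "\<dots> = order c p" using order_0I[OF nz] order_power_n_n[of "0::'a" "order c p"] by simp
  finally show ?thesis .
qed

lemma coeff_linear_power_pred:
  "coeff ([:-c, 1:] ^ Suc n) n = - of_nat (Suc n) * (c :: 'a::comm_ring_1)"
proof (induction n)
  case (Suc n)
  define P where "P = [:-c, 1:] ^ Suc n"
  have "[:-c, 1:] ^ Suc (Suc n) = smult (-c) P + pCons 0 P"
    by (simp add: P_def mult_pCons_left del: power_Suc) (simp add: P_def)
  hence "coeff ([:-c, 1:] ^ Suc (Suc n)) (Suc n) = -c * coeff P (Suc n) + coeff P n"
    by simp
  also have "coeff P (Suc n) = 1" unfolding P_def by (rule coeff_linear_power)
  also have "coeff P n = - of_nat (Suc n) * c" using Suc by (simp add: P_def)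
  finally show ?case by (simp add: algebra_simps)
qed simp

section \<open>Newton--Puiseux roots\<close>

definition fps_poly_at_0 :: "'a::zero fps poly \<Rightarrow> 'a poly" where
  "fps_poly_at_0 F = map_poly (\<lambda>q. q $ 0) F"

text \<open>Then \<open>y(x^(1/n))\<close> is a Puiseux series root of \<open>F(x, y)\<close> vanishing at \<open>x = 0\<close>.\<close>
definition puiseux_root :: "'a::field fps poly \<Rightarrow> nat \<Rightarrow> 'a fps \<Rightarrow> bool" where
  "puiseux_root F n y \<longleftrightarrow> n > 0 \<and> y $ 0 = 0 \<and> poly (map_poly (\<lambda>q. q oo fps_X ^ n) F) y = 0"

text \<open>\<open>F(t^b, t^a (c + y)) = t^(a m) G(t, y)\<close>: the change of variables attached to an edge of
  slope \<open>a/b\<close> of the Newton polygon of \<open>F\<close>.\<close>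
definition newton_transform ::
    "'a::field fps poly \<Rightarrow> nat \<Rightarrow> nat \<Rightarrow> 'a \<Rightarrow> nat \<Rightarrow> 'a fps poly \<Rightarrow> bool" where
  "newton_transform F a b c m G \<longleftrightarrow>
     pcompose (map_poly (\<lambda>q. q oo fps_X ^ b) F) [:fps_const c * fps_X ^ a, fps_X ^ a:]
       = smult (fps_X ^ (a * m)) G"

lemma coeff_fps_poly_at_0: "coeff (fps_poly_at_0 F) j = coeff F j $ 0"
  by (simp add: fps_poly_at_0_def coeff_map_poly)

lemma newton_transform_1:
  "newton_transform F a 1 c m G \<longleftrightarrow>
     pcompose F [:fps_const c * fps_X ^ a, fps_X ^ a:] = smult (fps_X ^ (a * m)) G"
  by (simp add: newton_transform_def)

lemma fps_compose_X_power_X_power: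
  fixes q :: "'a::idom fps"
  assumes "n > 0" "b > 0"
  shows "(q oo fps_X ^ b) oo fps_X ^ n = q oo fps_X ^ (b * n)"
proof -
  have "(q oo fps_X ^ b) oo fps_X ^ n = q oo (fps_X ^ b oo fps_X ^ n)"
    using assms by (simp add: fps_compose_assoc)
  also have "fps_X ^ b oo fps_X ^ n = (fps_X ^ n :: 'a fps) ^ b"
    using assms by (simp add: fps_X_power_compose)
  finally show ?thesis by (simp only: power_mult[symmetric] mult.commute)
qed

lemma puiseux_root_newton_transform:
  fixes F G :: "'a::field fps poly"
  assumes a: "a > 0" and b: "b > 0" and tr: "newton_transform F a b c m G"
    and root: "puiseux_root G n y"
  shows "puiseux_root F (b * n) (fps_X ^ (a * n) * (fps_const c + y))"
proof -
  have n: "n > 0" using root by (simp add: puiseux_root_def)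
  define h where "h = (\<lambda>q::'a fps. q oo fps_X ^ n)"
  have h0: "h 0 = 0" and hadd: "\<And>x y. h (x + y) = h x + h y"
    and hmult: "\<And>x y. h (x * y) = h x * h y"
    using n by (simp_all add: h_def fps_compose_add_distrib fps_compose_mult_distrib)
  have hX: "h (fps_X ^ k) = fps_X ^ (k * n)" for k
  proof -
    have "h (fps_X ^ k) = (fps_X ^ n) ^ k" using n by (simp add: h_def fps_X_power_compose)
    thus ?thesis by (simp only: power_mult[symmetric] mult.commute)
  qed
  have "map_poly h (pcompose (map_poly (\<lambda>q. q oo fps_X ^ b) F) [:fps_const c * fps_X ^ a, fps_X ^ a:])
      = map_poly h (smult (fps_X ^ (a * m)) G)"
    using tr by (simp add: newton_transform_def)
  hence "pcompose (map_poly h (map_poly (\<lambda>q. q oo fps_X ^ b) F))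
           (map_poly h [:fps_const c * fps_X ^ a, fps_X ^ a:])
         = smult (h (fps_X ^ (a * m))) (map_poly h G)"
    by (simp only: map_poly_hom_pcompose[OF h0 hadd hmult] map_poly_smult[OF h0 hmult])
  moreover have "map_poly h (map_poly (\<lambda>q. q oo fps_X ^ b) F) = map_poly (\<lambda>q. q oo fps_X ^ (b * n)) F"
    by (simp add: map_poly_map_poly h_def o_def fps_compose_X_power_X_power[OF n b])
  moreover have "map_poly h [:fps_const c * fps_X ^ a, fps_X ^ a:]
      = [:fps_const c * fps_X ^ (a * n), fps_X ^ (a * n):]"
    using n by (simp add: map_poly_pCons h0 hmult hX) (simp add: h_def)
  ultimately have eq: "pcompose (map_poly (\<lambda>q. q oo fps_X ^ (b * n)) F)
      [:fps_const c * fps_X ^ (a * n), fps_X ^ (a * n):] = smult (h (fps_X ^ (a * m))) (map_poly h G)"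
    by simp
  have "poly (map_poly (\<lambda>q. q oo fps_X ^ (b * n)) F) (fps_X ^ (a * n) * (fps_const c + y))
      = poly (pcompose (map_poly (\<lambda>q. q oo fps_X ^ (b * n)) F)
          [:fps_const c * fps_X ^ (a * n), fps_X ^ (a * n):]) y"
    by (simp add: poly_pcompose algebra_simps)
  also have "\<dots> = h (fps_X ^ (a * m)) * poly (map_poly h G) y" by (simp add: eq)
  also have "poly (map_poly h G) y = 0" using root by (simp add: puiseux_root_def h_def)
  finally show ?thesis
    using a b n by (simp add: puiseux_root_def fps_X_power_mult_nth)
qed

text \<open>The coefficients of the solution \<open>y\<^sub>k = t^(a k) (c k + y\<^sub>k\<^sub>+\<^sub>1)\<close> of an infinite
  chain of transformations with positive exponents \<open>a k\<close>.\<close>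
function newton_chain_coeff :: "(nat \<Rightarrow> nat) \<Rightarrow> (nat \<Rightarrow> 'a::zero) \<Rightarrow> nat \<Rightarrow> nat \<Rightarrow> 'a" where
  "newton_chain_coeff a c k j = (if a k = 0 \<or> j < a k then 0 else if j = a k then c k
      else newton_chain_coeff a c (Suc k) (j - a k))"
  by auto
termination by (relation "measure (\<lambda>(a, c, k, j). j)") auto

declare newton_chain_coeff.simps [simp del]

lemma root_of_newton_chain:
  fixes F :: "nat \<Rightarrow> 'a::field fps poly"
  assumes m: "m > 0" and a: "\<And>k. a k > 0"
    and tr: "\<And>k. pcompose (F k) [:fps_const (c k) * fps_X ^ a k, fps_X ^ a k:]
                   = smult (fps_X ^ (a k * m)) (F (Suc k))"
  shows "\<exists>y. y $ 0 = 0 \<and> poly (F 0) y = 0"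
proof -
  define y where "y k = Abs_fps (newton_chain_coeff a c k)" for k
  have y0: "y k $ 0 = 0" for k using a[of k] by (simp add: y_def newton_chain_coeff.simps)
  have y_rec: "y k = fps_X ^ a k * (fps_const (c k) + y (Suc k))" for k
  proof (rule fps_ext)
    fix n
    show "y k $ n = (fps_X ^ a k * (fps_const (c k) + y (Suc k))) $ n"
      using a[of k] y0[of "Suc k"]
      by (auto simp: fps_X_power_mult_nth y_def newton_chain_coeff.simps[of a c k n])
  qed
  define e where "e k = (\<Sum>i<k. a i)" for k
  have e: "k \<le> e k" for k
    using sum_mono[of "{..<k}" "\<lambda>_. 1" a] a by (simp add: e_def Suc_le_eq)
  have main: "poly (F 0) (y 0) = fps_X ^ (m * e k) * poly (F k) (y k)" for k
  proof (induction k)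
    case (Suc k)
    have "poly (F k) (y k) = poly (pcompose (F k) [:fps_const (c k) * fps_X ^ a k, fps_X ^ a k:]) (y (Suc k))"
      by (subst y_rec) (simp add: poly_pcompose algebra_simps)
    also have "\<dots> = fps_X ^ (a k * m) * poly (F (Suc k)) (y (Suc k))"
      by (simp add: tr)
    finally show ?case
      using Suc by (simp add: e_def power_add algebra_simps)
  qed (simp add: e_def)
  have "poly (F 0) (y 0) = 0"
  proof (rule fps_ext)
    fix n
    have "e (Suc n) \<le> m * e (Suc n)" using m by simp
    hence "n < m * e (Suc n)" using e[of "Suc n"] by linarith
    thus "poly (F 0) (y 0) $ n = 0 $ n"
      by (subst main[of "Suc n"]) (simp add: fps_X_power_mult_nth)
  qed
  thus ?thesis using y0 by blast
qed

lemma root_of_newton_closed: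
  fixes P :: "'a::field fps poly \<Rightarrow> bool"
  assumes m: "m > 0" and F: "P F"
    and step: "\<And>G. P G \<Longrightarrow> \<exists>a c G'. a > 0 \<and> newton_transform G a 1 c m G' \<and> P G'"
  shows "\<exists>y. y $ 0 = 0 \<and> poly F y = 0"
proof -
  have "\<exists>Fs. \<forall>k. (P (Fs k) \<and> (k = 0 \<longrightarrow> Fs k = F)) \<and>
      (\<exists>a c. a > 0 \<and> newton_transform (Fs k) a 1 c m (Fs (Suc k)))"
    by (rule dependent_nat_choice) (use F step in blast)+
  then obtain Fs where Fs0: "Fs 0 = F"
    and "\<forall>k. \<exists>a c. a > 0 \<and> newton_transform (Fs k) a 1 c m (Fs (Suc k))"
    by blast
  then obtain a c where "\<And>k. a k > 0 \<and> newton_transform (Fs k) (a k) 1 (c k) m (Fs (Suc k))"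
    by metis
  hence "\<exists>y. y $ 0 = 0 \<and> poly (Fs 0) y = 0"
    unfolding newton_transform_1 by (intro root_of_newton_chain[OF m, of a]) blast+
  thus ?thesis using Fs0 by simp
qed

lemma min_slope_coprime:
  fixes v :: "nat \<Rightarrow> nat"
  assumes fin: "finite S" and ne: "S \<noteq> {}" and S: "\<And>j. j \<in> S \<Longrightarrow> j < m \<and> 0 < v j"
  obtains js a b where "js \<in> S" "a > 0" "b > 0" "coprime a b" "a * (m - js) = b * v js"
    "\<And>j. j \<in> S \<Longrightarrow> a * (m - j) \<le> b * v j"
proof -
  define f where "f j = (of_nat (v j) / of_nat (m - j) :: rat)" for j
  have "Min (f ` S) \<in> f ` S" using fin ne by (intro Min_in) auto
  then obtain js where js: "js \<in> S" "f js = Min (f ` S)" by auto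
  have jsm: "js < m" "0 < v js" using S[OF js(1)] by auto
  have cross: "v js * (m - j) \<le> v j * (m - js)" if "j \<in> S" for j
  proof -
    have "f js \<le> f j" using js(2) fin that by simp
    hence "of_nat (v js) * of_nat (m - j) \<le> (of_nat (v j) * of_nat (m - js) :: rat)"
      using S[OF that] jsm by (simp add: f_def divide_le_eq le_divide_eq field_simps)
    thus ?thesis by (simp only: of_nat_mult[symmetric] of_nat_le_iff)
  qed
  define g where "g = gcd (v js) (m - js)"
  define a where "a = v js div g"
  define b where "b = (m - js) div g"
  have ga: "v js = g * a" and gb: "m - js = g * b" by (simp_all add: a_def b_def g_def)
  have g: "g > 0" using jsm by (simp add: g_def)
  have "a > 0" "b > 0" using ga gb jsm by (auto intro: gr0I)
  moreover have "coprime a b"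
    unfolding a_def b_def g_def using jsm by (intro div_gcd_coprime) auto
  moreover have "a * (m - js) = b * v js" using ga gb by simp
  moreover have "a * (m - j) \<le> b * v j" if "j \<in> S" for j
  proof -
    have "g * (a * (m - j)) \<le> g * (b * v j)"
      using cross[OF that] ga gb by (simp add: algebra_simps)
    thus ?thesis using g by simp
  qed
  ultimately show thesis using that js(1) by blast
qed

text \<open>Writing \<open>F = \<Sum> F\<^sub>j\<^sub>k t^k y^j\<close>, the line \<open>b k + a j = a m\<close> through \<open>(j, k) = (m, 0)\<close>
  supports the Newton polygon of \<open>F\<close> along an edge whose other end is
  \<open>(js, subdegree F\<^sub>j\<^sub>s)\<close>.\<close>
lemma newton_polygon_edge:
  fixes F :: "'a::field fps poly"
  assumes m: "m > 0" and F0: "coeff F 0 \<noteq> 0" and low: "\<And>j. j < m \<Longrightarrow> coeff F j $ 0 = 0"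
  obtains a b js where "a > 0" "b > 0" "coprime a b" "js < m" "coeff F js \<noteq> 0"
    "a * (m - js) = b * subdegree (coeff F js)"
    "\<And>j k. coeff F j $ k \<noteq> 0 \<Longrightarrow> a * m \<le> b * k + a * j"
proof -
  define S where "S = {j. j < m \<and> coeff F j \<noteq> 0}"
  have S: "j < m \<and> 0 < subdegree (coeff F j)" if "j \<in> S" for j
    using that low[of j] by (auto simp: S_def subdegree_pos_iff)
  have "finite S" "S \<noteq> {}" using m F0 by (auto simp: S_def)
  then obtain js a b where ab: "js \<in> S" "a > 0" "b > 0" "coprime a b"
      "a * (m - js) = b * subdegree (coeff F js)"
    and slope: "\<And>j. j \<in> S \<Longrightarrow> a * (m - j) \<le> b * subdegree (coeff F j)"
    using min_slope_coprime[of S m "\<lambda>j. subdegree (coeff F j)"] S by blast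
  have "a * m \<le> b * k + a * j" if "coeff F j $ k \<noteq> 0" for j k
  proof (cases "j < m")
    case True
    hence "j \<in> S" using that by (auto simp: S_def)
    have "a * m = a * (m - j) + a * j" using True by (simp add: algebra_simps)
    also have "a * (m - j) \<le> b * subdegree (coeff F j)" by (rule slope[OF \<open>j \<in> S\<close>])
    also have "subdegree (coeff F j) \<le> k" using that by (rule subdegree_leI)
    finally show ?thesis by simp
  next
    case False
    hence "a * m \<le> a * j" by simp
    thus ?thesis by linarith
  qed
  thus thesis using that ab by (auto simp: S_def)
qed

text \<open>The terms of \<open>F\<close> on the line \<open>b k + a j = a m\<close>, evaluated at \<open>t = 1\<close>.\<close>
definition edge_poly :: "'a::field fps poly \<Rightarrow> nat \<Rightarrow> nat \<Rightarrow> nat \<Rightarrow> 'a poly" where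
  "edge_poly F a b m =
     (\<Sum>j\<le>m. monom (if b dvd a * (m - j) then coeff F j $ (a * (m - j) div b) else 0) j)"

lemma coeff_edge_poly:
  "coeff (edge_poly F a b m) j =
     (if j \<le> m \<and> b dvd a * (m - j) then coeff F j $ (a * (m - j) div b) else 0)"
  by (simp add: edge_poly_def coeff_sum coeff_monom)

lemma degree_edge_poly:
  assumes "coeff F m $ 0 \<noteq> 0"
  shows "degree (edge_poly F a b m) = m"
proof (rule antisym)
  show "degree (edge_poly F a b m) \<le> m" by (rule degree_le) (simp add: coeff_edge_poly)
  show "m \<le> degree (edge_poly F a b m)" using assms by (intro le_degree) (simp add: coeff_edge_poly)
qed

text \<open>The coefficient of \<open>y^j\<close> in \<open>F(t^b, t^a y)\<close>.\<close>
definition newton_term :: "'a::field fps poly \<Rightarrow> nat \<Rightarrow> nat \<Rightarrow> nat \<Rightarrow> 'a fps" where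
  "newton_term F a b j = (coeff F j oo fps_X ^ b) * fps_X ^ (a * j)"

lemma nth_newton_term:
  "newton_term F a b j $ i =
     (if i < a * j then 0 else if b dvd (i - a * j) then coeff F j $ ((i - a * j) div b) else 0)"
  by (simp add: newton_term_def mult.commute[of _ "fps_X ^ _"] fps_X_power_mult_nth
      fps_nth_compose_X_power)

lemma newton_term_divisible:
  assumes above: "\<And>j k. coeff F j $ k \<noteq> 0 \<Longrightarrow> a * m \<le> b * k + a * j"
  shows "newton_term F a b j = fps_X ^ (a * m) * fps_shift (a * m) (newton_term F a b j)"
proof (rule fps_ext)
  fix i
  have "coeff F j $ ((i - a * j) div b) = 0" if "i < a * m" "a * j \<le> i" "b dvd (i - a * j)"
    using above[of j "(i - a * j) div b"] that by fastforce
  thus "newton_term F a b j $ i = (fps_X ^ (a * m) * fps_shift (a * m) (newton_term F a b j)) $ i"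
    by (simp add: fps_X_power_mult_nth nth_newton_term)
qed

lemma newton_transform_exists:
  fixes F :: "'a::field fps poly"
  assumes a: "a > 0" and above: "\<And>j k. coeff F j $ k \<noteq> 0 \<Longrightarrow> a * m \<le> b * k + a * j"
  obtains G where "newton_transform F a b c m G"
    "fps_poly_at_0 G = pcompose (edge_poly F a b m) [:c, 1:]"
proof -
  define s where "s j = fps_shift (a * m) (newton_term F a b j)" for j
  have term_shift: "newton_term F a b j = fps_X ^ (a * m) * s j" for j
    unfolding s_def by (rule newton_term_divisible[OF above])
  define N where "N = degree F"
  define H where "H = (\<Sum>j\<le>N. monom (s j) j)"
  define G where "G = pcompose H [:fps_const c, 1:]"
  have "newton_transform F a b c m G"
  proof -
    have deg: "degree (map_poly (\<lambda>q. q oo fps_X ^ b) F) \<le> N"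
      by (simp add: N_def map_poly_degree_leq)
    have lin: "[:fps_const c * fps_X ^ a, fps_X ^ a:] = smult (fps_X ^ a) [:fps_const c, 1:]"
      by (simp add: mult.commute)
    have "pcompose (map_poly (\<lambda>q. q oo fps_X ^ b) F) [:fps_const c * fps_X ^ a, fps_X ^ a:]
        = (\<Sum>j\<le>N. smult (coeff F j oo fps_X ^ b) ([:fps_const c * fps_X ^ a, fps_X ^ a:] ^ j))"
      by (simp add: pcompose_eq_sum_coeff[OF deg] coeff_map_poly)
    also have "\<dots> = (\<Sum>j\<le>N. smult (newton_term F a b j) ([:fps_const c, 1:] ^ j))"
      by (simp only: lin smult_power smult_smult power_mult newton_term_def)
    also have "\<dots> = smult (fps_X ^ (a * m)) G"
      by (simp add: G_def H_def term_shift pcompose_sum pcompose_monom smult_sum_right)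
    finally show ?thesis by (simp add: newton_transform_def)
  qed
  moreover have "fps_poly_at_0 H = edge_poly F a b m"
  proof (rule poly_eqI)
    fix j
    have "a * m - a * j = a * (m - j)" by (simp add: diff_mult_distrib2)
    thus "coeff (fps_poly_at_0 H) j = coeff (edge_poly F a b m) j"
      using a by (auto simp: coeff_fps_poly_at_0 H_def s_def coeff_sum coeff_monom nth_newton_term
          coeff_edge_poly N_def coeff_eq_0)
  qed
  hence "fps_poly_at_0 G = pcompose (edge_poly F a b m) [:c, 1:]"
    by (simp add: G_def fps_poly_at_0_def map_poly_hom_pcompose map_poly_pCons)
  ultimately show thesis by (rule that)
qed

text \<open>Here \<open>\<phi> = \<kappa> (y - c)^m\<close>, whose coefficient of \<open>y^(m-1)\<close> is \<open>-m \<kappa> c\<close>; this is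
  where characteristic \<open>0\<close> is used.\<close>
lemma coeff_pred_degree_if_full_order:
  fixes \<phi> :: "'a::field_char_0 poly"
  assumes nz: "\<phi> \<noteq> 0" and c0: "c \<noteq> 0" and full: "order c \<phi> = degree \<phi>" and m0: "degree \<phi> > 0"
  shows "coeff \<phi> (degree \<phi> - 1) \<noteq> 0"
proof -
  define m where "m = degree \<phi>"
  hence dm: "degree \<phi> = m" by simp
  have "[:-c,1:] ^ m dvd \<phi>" using order_1[of c \<phi>] full dm by simp
  then obtain k where k: "\<phi> = [:-c,1:] ^ m * k" by (elim dvdE)
  have "k \<noteq> 0" using k nz by auto
  hence "degree k = 0" using k dm by (simp add: degree_mult_eq degree_linear_power)
  then obtain \<kappa> where "k = [:\<kappa>:]" by (elim degree_eq_zeroE)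
  with k nz have \<phi>: "\<phi> = smult \<kappa> ([:-c,1:] ^ m)" "\<kappa> \<noteq> 0" by auto
  obtain n where n: "m = Suc n" using m0 dm by (cases m) auto
  have "coeff \<phi> (m - 1) = \<kappa> * (- of_nat m * c)"
    using \<phi>(1) n coeff_linear_power_pred[of c n] by simp
  thus ?thesis using \<phi>(2) c0 m0 dm by simp
qed

lemma nonmonomial_poly_root:
  fixes \<phi> :: "'a::field poly"
  assumes ac: "alg_closed TYPE('a)" and js: "js < degree \<phi>" "coeff \<phi> js \<noteq> 0"
  obtains c where "c \<noteq> 0" "order c \<phi> > 0"
proof -
  have nz: "\<phi> \<noteq> 0" using js by auto
  define k0 where "k0 = order 0 \<phi>"
  have k0: "k0 \<le> js" using order_0_le_nonzero_coeff[OF js(2)] by (simp add: k0_def)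
  obtain r where r: "\<phi> = [:-0,1:] ^ k0 * r" "\<not> [:-0,1:] dvd r"
    using order_decomp[OF nz] k0_def by blast
  have r0: "poly r 0 \<noteq> 0" using r(2) by (simp add: poly_eq_0_iff_dvd)
  have rnz: "r \<noteq> 0" using r0 by auto
  hence "degree r = degree \<phi> - k0" using r(1) by (simp add: degree_mult_eq degree_power_eq)
  hence "degree r > 0" using k0 js by simp
  then obtain c where c: "poly r c = 0" using ac unfolding alg_closed_def by blast
  have c0: "c \<noteq> 0" using c r0 by auto
  have "order c \<phi> = order c ([:-0,1:] ^ k0) + order c r"
    using nz r(1) order_mult by metis
  also have "order c ([:-0,1:] ^ k0) = 0" using c0 by (intro order_0I) simp
  finally have "order c \<phi> = order c r" by simp
  hence "order c \<phi> > 0" using c rnz order_root by auto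
  thus thesis using that c0 by blast
qed

lemma newton_step:
  fixes F :: "'a::field_char_0 fps poly"
  assumes ac: "alg_closed TYPE('a)" and F0: "coeff F 0 \<noteq> 0"
    and nz: "fps_poly_at_0 F \<noteq> 0" and m: "order 0 (fps_poly_at_0 F) = m" "m > 0"
  obtains a b c G where "a > 0" "b > 0" "newton_transform F a b c m G" "fps_poly_at_0 G \<noteq> 0"
    "0 < order 0 (fps_poly_at_0 G)" "order 0 (fps_poly_at_0 G) \<le> m"
    "order 0 (fps_poly_at_0 G) = m \<Longrightarrow> b = 1"
proof -
  have low: "coeff F j $ 0 = 0" if "j < m" for j
    using coeff_order_0(1)[OF nz] that m by (simp add: coeff_fps_poly_at_0)
  have top: "coeff F m $ 0 \<noteq> 0"
    using coeff_order_0(2)[OF nz] m by (simp add: coeff_fps_poly_at_0)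
  obtain a b js where ab: "a > 0" "b > 0" "coprime a b"
    and js: "js < m" "coeff F js \<noteq> 0" "a * (m - js) = b * subdegree (coeff F js)"
    and above: "\<And>j k. coeff F j $ k \<noteq> 0 \<Longrightarrow> a * m \<le> b * k + a * j"
    using newton_polygon_edge[OF m(2) F0 low] by blast
  define \<phi> where "\<phi> = edge_poly F a b m"
  have deg: "degree \<phi> = m" unfolding \<phi>_def by (rule degree_edge_poly[OF top])
  have "coeff \<phi> js \<noteq> 0" using js ab(2) by (simp add: \<phi>_def coeff_edge_poly)
  moreover have "js < degree \<phi>" using js(1) deg by simp
  ultimately obtain c where c: "c \<noteq> 0" "order c \<phi> > 0"
    using nonmonomial_poly_root[OF ac] by blast
  obtain G where G: "newton_transform F a b c m G" "fps_poly_at_0 G = pcompose \<phi> [:c, 1:]"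
    using newton_transform_exists[OF ab(1) above, where c = c] unfolding \<phi>_def by blast
  have \<phi>0: "\<phi> \<noteq> 0" using deg m(2) by auto
  have ord: "order 0 (fps_poly_at_0 G) = order c \<phi>"
    using G(2) order_0_pcompose_shift[OF \<phi>0] by simp
  have b1: "b = 1" if "order c \<phi> = m"
  proof -
    \<comment> \<open>the edge then contains a term of \<open>F\<close> with \<open>j = m - 1\<close>\<close>
    have "b dvd a * (m - (m - 1))"
      using coeff_pred_degree_if_full_order[OF \<phi>0 c(1)] that deg m(2)
      by (simp add: \<phi>_def coeff_edge_poly split: if_splits)
    hence "b dvd gcd a b" using m(2) by simp
    thus "b = 1" using ab(3) by simp
  qed
  show thesis
  proof (rule that[OF ab(1,2) G(1)])
    show "fps_poly_at_0 G \<noteq> 0" using G(2) \<phi>0 by (simp add: pcompose_eq_0_iff)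
    show "0 < order 0 (fps_poly_at_0 G)" using ord c(2) by simp
    show "order 0 (fps_poly_at_0 G) \<le> m" using ord order_degree[OF \<phi>0] deg by simp
    show "order 0 (fps_poly_at_0 G) = m \<Longrightarrow> b = 1" using ord b1 by simp
  qed
qed

lemma puiseux_root_if_coeff_0_eq_0: "coeff F 0 = 0 \<Longrightarrow> puiseux_root F 1 0"
  by (simp add: puiseux_root_def poly_0_coeff_0 coeff_map_poly)

lemma newton_step_without_root:
  fixes G :: "'a::field_char_0 fps poly"
  assumes ac: "alg_closed TYPE('a)" and G: "fps_poly_at_0 G \<noteq> 0" "order 0 (fps_poly_at_0 G) = m"
    and m: "m > 0" and no_root: "\<not> (\<exists>n y. puiseux_root G n y)"
    and IH: "\<And>G' :: 'a fps poly. fps_poly_at_0 G' \<noteq> 0 \<Longrightarrow> 0 < order 0 (fps_poly_at_0 G') \<Longrightarrow>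
      order 0 (fps_poly_at_0 G') < m \<Longrightarrow> \<exists>n y. puiseux_root G' n y"
  shows "\<exists>a c G'. a > 0 \<and> newton_transform G a 1 c m G' \<and> fps_poly_at_0 G' \<noteq> 0
    \<and> order 0 (fps_poly_at_0 G') = m \<and> \<not> (\<exists>n y. puiseux_root G' n y)"
proof -
  have "coeff G 0 \<noteq> 0" using puiseux_root_if_coeff_0_eq_0 no_root by blast
  then obtain a b c G' where ab: "a > 0" "b > 0" and tr: "newton_transform G a b c m G'"
    and G': "fps_poly_at_0 G' \<noteq> 0" "0 < order 0 (fps_poly_at_0 G')"
      "order 0 (fps_poly_at_0 G') \<le> m" "order 0 (fps_poly_at_0 G') = m \<Longrightarrow> b = 1"
    using newton_step[OF ac _ G m] by blast
  have no_root': "\<not> (\<exists>n y. puiseux_root G' n y)"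
    using puiseux_root_newton_transform[OF ab tr] no_root by blast
  hence "order 0 (fps_poly_at_0 G') = m" using IH[OF G'(1,2)] G'(3) by fastforce
  thus ?thesis using ab(1) tr G'(4) G'(1) no_root' by auto
qed

text \<open>Induction on the multiplicity \<open>m\<close> of the root \<open>0\<close> of \<open>F(0, y)\<close>: if Newton steps never
  lowered \<open>m\<close>, the resulting infinite chain of transformations would converge to a root.\<close>
theorem puiseux_root_exists:
  fixes F :: "'a::field_char_0 fps poly"
  assumes ac: "alg_closed TYPE('a)" and "fps_poly_at_0 F \<noteq> 0" "order 0 (fps_poly_at_0 F) > 0"
  shows "\<exists>n y. puiseux_root F n y"
proof -
  have "\<exists>n y. puiseux_root F n y"
    if "fps_poly_at_0 F \<noteq> 0" "order 0 (fps_poly_at_0 F) = m" "m > 0" for m and F :: "'a fps poly"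
    using that
  proof (induction m arbitrary: F rule: less_induct)
    case (less m F)
    define P where "P G \<longleftrightarrow> fps_poly_at_0 G \<noteq> 0 \<and> order 0 (fps_poly_at_0 G) = m
        \<and> \<not> (\<exists>n y. puiseux_root G n y)" for G :: "'a fps poly"
    have step: "\<exists>a c G'. a > 0 \<and> newton_transform G a 1 c m G' \<and> P G'" if "P G" for G
      using newton_step_without_root[OF ac _ _ less.prems(3)] less.IH \<open>P G\<close>
      unfolding P_def by blast
    show ?case
    proof (rule ccontr)
      assume "\<not> (\<exists>n y. puiseux_root F n y)"
      hence "P F" using less.prems by (simp add: P_def)
      then obtain y where "y $ 0 = 0" "poly F y = 0"
        using root_of_newton_closed[OF less.prems(3) _ step] by blast
      hence "puiseux_root F 1 y" by (simp add: puiseux_root_def)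
      thus False using \<open>P F\<close> by (auto simp: P_def)
    qed
  qed
  thus ?thesis using assms by blast
qed

section \<open>Evaluating polynomials and rational functions at Laurent series\<close>

definition eval1 :: "'a::field poly \<Rightarrow> 'a fls \<Rightarrow> 'a fls" where
  "eval1 w Z = poly (map_poly fls_const w) Z"

lemma fls_const_hom:
  "fls_const (0::'a::field) = 0" "fls_const (1::'a::field) = 1"
  "\<And>x y::'a::field. fls_const (x + y) = fls_const x + fls_const y"
  "\<And>x y::'a::field. fls_const (x * y) = fls_const x * fls_const y"
  "\<And>x y::'a::field. fls_const (x - y) = fls_const x - fls_const y"
  by (simp_all add: fls_plus_const fls_const_mult_const fls_minus_const)

lemma eval1_add: "eval1 (u + v) Z = eval1 u Z + eval1 v Z"
  unfolding eval1_def by (subst map_poly_hom_add[OF fls_const_hom(1,3)]) (rule poly_add)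

lemma eval1_diff: "eval1 (u - v) Z = eval1 u Z - eval1 v Z"
  unfolding eval1_def by (subst map_poly_hom_diff[OF fls_const_hom(1,5)]) (rule poly_diff)

lemma eval1_mult: "eval1 (u * v) Z = eval1 u Z * eval1 v Z"
  unfolding eval1_def by (subst map_poly_hom_mult[OF fls_const_hom(1,3,4)]) (rule poly_mult)

lemma eval1_power: "eval1 (u ^ n) Z = eval1 u Z ^ n"
proof (induction n)
  case 0 show ?case by (simp add: eval1_def map_poly_pCons fls_const_0 fls_const_1)
next
  case (Suc n) thus ?case by (simp add: eval1_mult)
qed

lemma eval1_const: "eval1 [:c:] Z = fls_const c"
  by (simp add: eval1_def map_poly_pCons fls_const_0)

lemma eval1_0: "eval1 0 Z = 0"
  by (simp add: eval1_def)

lemma eval1_1: "eval1 1 Z = 1"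
  by (simp add: eval1_def)

lemma eval1_linear: "eval1 [:-c, 1:] Z = Z - fls_const c"
proof -
  have "fls_const (-c) = - fls_const c" by (metis fls_minus_const fls_const_0 diff_0)
  thus ?thesis by (simp add: eval1_def map_poly_pCons fls_const_0 fls_const_1)
qed

lemma fls_subdegree_neg_iff: "fls_subdegree Z < 0 \<longleftrightarrow> (\<exists>i<0. fls_nth Z i \<noteq> 0)"
proof
  assume "fls_subdegree Z < 0"
  moreover hence "Z \<noteq> 0" by auto
  ultimately show "\<exists>i<0. fls_nth Z i \<noteq> 0" by (intro exI[of _ "fls_subdegree Z"]) auto
next
  assume "\<exists>i<0. fls_nth Z i \<noteq> 0"
  then obtain i where "i < 0" "fls_nth Z i \<noteq> 0" by blast
  thus "fls_subdegree Z < 0" using fls_subdegree_leI[of Z i] by simp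
qed

lemma eval1_const_plus_fps:
  fixes e0 :: "'a::field fps"
  assumes "e0 $ 0 = 0"
  shows "\<exists>W. eval1 w (fls_const c + fps_to_fls e0) = fps_to_fls W \<and> W $ 0 = poly w c"
proof (induction w)
  case 0 then show ?case by (intro exI[of _ 0]) (simp add: eval1_def)
next
  case (pCons a w)
  then obtain W where W: "eval1 w (fls_const c + fps_to_fls e0) = fps_to_fls W" "W $ 0 = poly w c" by blast
  have "eval1 (pCons a w) (fls_const c + fps_to_fls e0)
      = fls_const a + (fls_const c + fps_to_fls e0) * eval1 w (fls_const c + fps_to_fls e0)"
    by (simp add: eval1_def map_poly_pCons)
  also have "\<dots> = fps_to_fls (fps_const a + (fps_const c + e0) * W)"
    by (simp add: W fls_times_fps_to_fls fps_to_fls_plus fps_const_to_fls)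
  finally show ?case using assms W(2) by (intro exI[of _ "fps_const a + (fps_const c + e0) * W"]) simp
qed

text \<open>\<open>x^d w(1/x)\<close> when \<open>degree w \<le> d\<close>.\<close>
definition pad_reflect :: "nat \<Rightarrow> 'a::comm_semiring_1 poly \<Rightarrow> 'a poly" where
  "pad_reflect d w = (\<Sum>i\<le>d. monom (coeff w i) (d - i))"

lemma coeff_pad_reflect: "coeff (pad_reflect d w) k = (if k \<le> d then coeff w (d - k) else 0)"
proof -
  have "coeff (pad_reflect d w) k = (\<Sum>i\<le>d. if d - i = k then coeff w i else 0)"
    by (simp add: pad_reflect_def coeff_sum coeff_monom)
  also have "\<dots> = (if k \<le> d then coeff w (d - k) else 0)"
  proof (cases "k \<le> d")
    case True
    have "(\<Sum>i\<le>d. if d - i = k then coeff w i else 0) = (\<Sum>i\<le>d. if i = d - k then coeff w i else 0)"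
      using True by (intro sum.cong) auto
    also have "\<dots> = coeff w (d - k)" by (simp add: sum.delta)
    finally show ?thesis using True by simp
  next
    case False
    thus ?thesis by (intro trans[OF sum.neutral]) auto
  qed
  finally show ?thesis .
qed

lemma poly_pad_reflect:
  fixes z :: "'b::field"
  assumes z: "z \<noteq> 0" and d: "degree w \<le> d"
  shows "poly w (inverse z) = inverse z ^ d * poly (pad_reflect d w) z"
proof -
  have "poly w (inverse z) = (\<Sum>i\<le>d. coeff w i * inverse z ^ i)"
    using d by (simp add: poly_altdef) (intro sum.mono_neutral_left, auto simp: coeff_eq_0)
  also have "\<dots> = (\<Sum>i\<le>d. inverse z ^ d * (coeff w i * z ^ (d - i)))"
  proof (rule sum.cong[OF refl])
    fix i assume "i \<in> {..d}"
    hence e1: "inverse z ^ d = inverse z ^ i * inverse z ^ (d - i)" by (simp flip: power_add)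
    have e2: "inverse z ^ (d - i) * z ^ (d - i) = 1" using z by (simp flip: power_mult_distrib)
    have "inverse z ^ d * (coeff w i * z ^ (d - i)) = coeff w i * inverse z ^ i * (inverse z ^ (d - i) * z ^ (d - i))"
      unfolding e1 by (simp only: mult_ac)
    thus "coeff w i * inverse z ^ i = inverse z ^ d * (coeff w i * z ^ (d - i))"
      unfolding e2 by (simp only: mult_1_right)
  qed
  also have "\<dots> = inverse z ^ d * poly (pad_reflect d w) z"
    by (simp add: pad_reflect_def poly_sum poly_monom sum_distrib_left)
  finally show ?thesis .
qed

lemma map_poly_pad_reflect: "h 0 = 0 \<Longrightarrow> map_poly h (pad_reflect d w) = pad_reflect d (map_poly h w)"
  by (intro poly_eqI) (simp add: coeff_map_poly coeff_pad_reflect)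

lemma fls_pos_subdegree_fps:
  fixes \<epsilon> :: "'a::field fls"
  assumes "fls_subdegree \<epsilon> > 0"
  shows "\<exists>e0. \<epsilon> = fps_to_fls e0 \<and> e0 $ 0 = 0"
proof -
  have e: "fps_to_fls (fls_regpart \<epsilon>) = \<epsilon>" using assms by (intro fls_regpart_to_fls_trivial) simp
  have "fls_nth (fps_to_fls (fls_regpart \<epsilon>)) 0 = 0" using e assms by simp
  hence "fls_regpart \<epsilon> $ 0 = 0" by (simp add: fps_to_fls_nth)
  thus ?thesis using e by metis
qed

lemma eval1_const_plus_small:
  fixes \<epsilon> :: "'a::field fls"
  assumes "fls_subdegree \<epsilon> > 0" "poly w c \<noteq> 0"
  shows "eval1 w (fls_const c + \<epsilon>) \<noteq> 0 \<and> fls_subdegree (eval1 w (fls_const c + \<epsilon>)) = 0"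
proof -
  obtain e0 where e0: "\<epsilon> = fps_to_fls e0" "e0 $ 0 = 0" using fls_pos_subdegree_fps[OF assms(1)] by blast
  obtain W where W: "eval1 w (fls_const c + fps_to_fls e0) = fps_to_fls W" "W $ 0 = poly w c"
    using eval1_const_plus_fps[OF e0(2)] by blast
  have "W \<noteq> 0" using W(2) assms(2) by auto
  moreover have "subdegree W = 0" using W(2) assms(2) by (simp add: subdegree_eq_0_iff)
  ultimately show ?thesis using W(1) e0(1) by (simp add: fls_subdegree_fls_to_fps)
qed

lemma eval1_moeb_inv:
  fixes \<phi> :: "'a::field fls"
  assumes neg: "fls_subdegree \<phi> < 0" and w: "w \<noteq> 0"
  shows "eval1 w (moeb_inv s \<phi>) \<noteq> 0 \<and> fls_subdegree (eval1 w (moeb_inv s \<phi>)) =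
    (case s of None \<Rightarrow> int (degree w) * fls_subdegree \<phi> | Some c \<Rightarrow> - int (order c w) * fls_subdegree \<phi>)"
proof -
  have phinz: "\<phi> \<noteq> 0" using neg by auto
  define \<epsilon> where "\<epsilon> = inverse \<phi>"
  have eps: "fls_subdegree \<epsilon> > 0" using neg by (simp add: \<epsilon>_def fls_inverse_subdegree)
  have epsnz: "\<epsilon> \<noteq> 0" using phinz by (simp add: \<epsilon>_def)
  show ?thesis
  proof (cases s)
    case (Some c)
    obtain w1 where w1: "w = [:-c,1:] ^ order c w * w1" "\<not> [:-c,1:] dvd w1"
      using order_decomp[OF w] by blast
    have pw1: "poly w1 c \<noteq> 0" using w1(2) by (simp add: poly_eq_0_iff_dvd)
    have Z: "moeb_inv s \<phi> = fls_const c + \<epsilon>" by (simp add: Some moeb_inv_def \<epsilon>_def)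
    have "eval1 w (moeb_inv s \<phi>) = \<epsilon> ^ order c w * eval1 w1 (fls_const c + \<epsilon>)"
      by (subst w1(1)) (simp add: Z eval1_mult eval1_power eval1_linear)
    moreover have "eval1 w1 (fls_const c + \<epsilon>) \<noteq> 0 \<and> fls_subdegree (eval1 w1 (fls_const c + \<epsilon>)) = 0"
      by (rule eval1_const_plus_small[OF eps pw1])
    ultimately show ?thesis using epsnz
      by (simp add: Some fls_subdegree_pow \<epsilon>_def fls_inverse_subdegree)
  next
    case None
    define d where "d = degree w"
    have dm: "degree (map_poly fls_const w) = d" by (simp add: d_def degree_map_poly)
    have "eval1 w (moeb_inv s \<phi>) = poly (map_poly fls_const w) (inverse \<epsilon>)"
      by (simp add: None moeb_inv_def eval1_def \<epsilon>_def)
    also have "\<dots> = inverse \<epsilon> ^ d * poly (pad_reflect d (map_poly fls_const w)) \<epsilon>"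
      by (rule poly_pad_reflect[OF epsnz]) (simp add: dm)
    also have "poly (pad_reflect d (map_poly fls_const w)) \<epsilon> = eval1 (pad_reflect d w) (fls_const 0 + \<epsilon>)"
      by (simp add: eval1_def map_poly_pad_reflect fls_const_0)
    finally have eq: "eval1 w (moeb_inv s \<phi>) = \<phi> ^ d * eval1 (pad_reflect d w) (fls_const 0 + \<epsilon>)"
      by (simp add: \<epsilon>_def)
    have "poly (pad_reflect d w) 0 \<noteq> 0" using w by (simp add: poly_0_coeff_0 coeff_pad_reflect d_def)
    hence "eval1 (pad_reflect d w) (fls_const 0 + \<epsilon>) \<noteq> 0 \<and> fls_subdegree (eval1 (pad_reflect d w) (fls_const 0 + \<epsilon>)) = 0"
      by (rule eval1_const_plus_small[OF eps])
    thus ?thesis using eq phinz by (simp add: None fls_subdegree_pow d_def)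
  qed
qed

text \<open>Independent of the chosen representative of \<open>f\<close> as soon as \<open>Z\<close> is transcendental,
  see \<open>eval_fract_Fract\<close>.\<close>
definition eval_fract :: "'a::field poly fract \<Rightarrow> 'a fls \<Rightarrow> 'a fls" where
  "eval_fract f Z = (SOME R. \<exists>u v. v \<noteq> 0 \<and> f = Fract u v \<and> R = eval1 u Z / eval1 v Z)"

definition fls_transcendental :: "'a::field fls \<Rightarrow> bool" where
  "fls_transcendental Z \<longleftrightarrow> (\<forall>w. w \<noteq> 0 \<longrightarrow> eval1 w Z \<noteq> 0)"

lemma fls_transcendental_moeb_inv: "fls_subdegree \<phi> < 0 \<Longrightarrow> fls_transcendental (moeb_inv s \<phi>)"
  using eval1_moeb_inv by (auto simp: fls_transcendental_def)

lemma eval1_quotient_Fract: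
  assumes tr: "fls_transcendental Z" and v: "v \<noteq> 0" and v': "v' \<noteq> 0" and eq: "Fract u v = Fract u' v'"
  shows "eval1 u Z / eval1 v Z = eval1 u' Z / eval1 v' Z"
proof -
  have "u' * v = u * v'" using eq v v' by (simp add: eq_fract)
  hence "eval1 u' Z * eval1 v Z = eval1 u Z * eval1 v' Z" by (simp flip: eval1_mult)
  moreover have "eval1 v Z \<noteq> 0" "eval1 v' Z \<noteq> 0" using tr v v' by (auto simp: fls_transcendental_def)
  ultimately show ?thesis by (simp add: field_simps)
qed

lemma eval_fract_Fract:
  assumes tr: "fls_transcendental Z" and v: "v \<noteq> 0" and f: "f = Fract u v"
  shows "eval_fract f Z = eval1 u Z / eval1 v Z"
proof -
  have ex: "\<exists>R. \<exists>u v. v \<noteq> 0 \<and> f = Fract u v \<and> R = eval1 u Z / eval1 v Z"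
    using v f by blast
  from someI_ex[OF ex] obtain u' v' where uv: "v' \<noteq> 0" "f = Fract u' v'" "eval_fract f Z = eval1 u' Z / eval1 v' Z"
    unfolding eval_fract_def by blast
  thus ?thesis using eval1_quotient_Fract[OF tr v uv(1)] f by simp
qed

lemma subdegree_eval1_quotient_neg_iff:
  assumes neg: "fls_subdegree \<phi> < 0" and v: "v \<noteq> 0" and u: "u \<noteq> 0"
  shows "(case s of None \<Rightarrow> degree u > degree v | Some c \<Rightarrow> order c v > order c u)
     \<longleftrightarrow> fls_subdegree (eval1 u (moeb_inv s \<phi>) / eval1 v (moeb_inv s \<phi>)) < 0"
proof -
  have U: "eval1 u (moeb_inv s \<phi>) \<noteq> 0" and V: "eval1 v (moeb_inv s \<phi>) \<noteq> 0"
    using eval1_moeb_inv[OF neg u] eval1_moeb_inv[OF neg v] by auto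
  have eq: "fls_subdegree (eval1 u (moeb_inv s \<phi>) / eval1 v (moeb_inv s \<phi>)) =
     fls_subdegree (eval1 u (moeb_inv s \<phi>)) - fls_subdegree (eval1 v (moeb_inv s \<phi>))"
    by (rule fls_divide_subdegree[OF U V])
  show ?thesis
  proof (cases s)
    case None
    have "fls_subdegree (eval1 u (moeb_inv s \<phi>) / eval1 v (moeb_inv s \<phi>)) =
       fls_subdegree \<phi> * (int (degree u) - int (degree v))"
      using eq eval1_moeb_inv[OF neg u, of s] eval1_moeb_inv[OF neg v, of s] None by (simp add: algebra_simps)
    thus ?thesis using neg None by (simp add: mult_less_0_iff)
  next
    case (Some c)
    have "fls_subdegree (eval1 u (moeb_inv s \<phi>) / eval1 v (moeb_inv s \<phi>)) =
       fls_subdegree \<phi> * (int (order c v) - int (order c u))"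
      using eq eval1_moeb_inv[OF neg u, of s] eval1_moeb_inv[OF neg v, of s] Some by (simp add: algebra_simps)
    thus ?thesis using neg Some by (simp add: mult_less_0_iff)
  qed
qed

lemma is_pole_1_iff_subdegree:
  assumes neg: "fls_subdegree \<phi> < 0"
  shows "is_pole_1 f s \<longleftrightarrow> fls_subdegree (eval_fract f (moeb_inv s \<phi>)) < 0"
proof -
  have tr: "fls_transcendental (moeb_inv s \<phi>)" by (rule fls_transcendental_moeb_inv[OF neg])
  show ?thesis
  proof
    assume "is_pole_1 f s"
    then obtain u v where uv: "v \<noteq> 0" "u \<noteq> 0" "f = Fract u v"
      "case s of None \<Rightarrow> degree u > degree v | Some c \<Rightarrow> order c v > order c u"
      by (auto simp: is_pole_1_def)
    thus "fls_subdegree (eval_fract f (moeb_inv s \<phi>)) < 0"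
      using subdegree_eval1_quotient_neg_iff[OF neg uv(1,2)] eval_fract_Fract[OF tr uv(1,3)] by simp
  next
    assume A: "fls_subdegree (eval_fract f (moeb_inv s \<phi>)) < 0"
    obtain u v where f: "f = Fract u v" and v: "v \<noteq> 0" by (cases f) auto
    have ev: "eval_fract f (moeb_inv s \<phi>) = eval1 u (moeb_inv s \<phi>) / eval1 v (moeb_inv s \<phi>)"
      by (rule eval_fract_Fract[OF tr v f])
    have u: "u \<noteq> 0"
    proof
      assume "u = 0"
      hence "eval_fract f (moeb_inv s \<phi>) = 0" by (simp add: ev eval1_0)
      thus False using A by simp
    qed
    have "case s of None \<Rightarrow> degree u > degree v | Some c \<Rightarrow> order c v > order c u"
      using subdegree_eval1_quotient_neg_iff[OF neg v u] A by (simp add: ev)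
    thus "is_pole_1 f s" using u v f by (auto simp: is_pole_1_def)
  qed
qed

lemma fls_subdegree_diff_neg:
  fixes A B :: "'a::field fls"
  assumes "(fls_subdegree A < 0) \<noteq> (fls_subdegree B < 0)"
  shows "fls_subdegree (A - B) < 0"
proof -
  obtain i where i: "i < 0" "fls_nth A i \<noteq> fls_nth B i"
    using assms fls_subdegree_neg_iff[of A] fls_subdegree_neg_iff[of B] by fastforce
  thus ?thesis using fls_subdegree_neg_iff[of "A - B"] by (auto simp: fls_minus_nth)
qed

lemma finite_is_pole_1: "finite {s. is_pole_1 (f :: 'a::field poly fract) s}"
proof -
  obtain u v where f: "f = Fract u v" and v: "v \<noteq> 0" by (cases f) auto
  define \<phi> where "\<phi> = (inverse fls_X :: 'a fls)"
  have neg: "fls_subdegree \<phi> < 0" by (simp add: \<phi>_def fls_inverse_subdegree)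
  have "{s. is_pole_1 f s} \<subseteq> insert None (Some ` {c. poly v c = 0})"
  proof
    fix s assume "s \<in> {s. is_pole_1 f s}"
    hence P: "fls_subdegree (eval_fract f (moeb_inv s \<phi>)) < 0"
      using is_pole_1_iff_subdegree[OF neg] by simp
    have ev: "eval_fract f (moeb_inv s \<phi>) = eval1 u (moeb_inv s \<phi>) / eval1 v (moeb_inv s \<phi>)"
      by (rule eval_fract_Fract[OF fls_transcendental_moeb_inv[OF neg] v f])
    have u: "u \<noteq> 0" using P ev by (auto simp: eval1_0)
    show "s \<in> insert None (Some ` {c. poly v c = 0})"
    proof (cases s)
      case (Some c)
      have "order c v > order c u"
        using subdegree_eval1_quotient_neg_iff[OF neg v u, of s] P ev Some by simp
      hence "poly v c = 0" using order_root[of v c] v by simp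
      thus ?thesis using Some by simp
    qed simp
  qed
  moreover have "finite (insert None (Some ` {c. poly v c = 0}))"
    using poly_roots_finite[OF v] by simp
  ultimately show ?thesis by (rule finite_subset)
qed

section \<open>Irreducible polynomials in \<open>K[x][y]\<close> are prime\<close>

lemma prime_factor_of_nonconst_poly:
  fixes c :: "'a::field poly"
  assumes "degree c > 0"
  obtains \<pi> where "prime_elem \<pi>" "\<pi> dvd c"
proof -
  have c: "c \<noteq> 0" using assms by auto
  obtain P where P: "prod_mset P = smult (inverse (lead_coeff c)) c"
    "\<And>\<pi>. \<pi> \<in># P \<Longrightarrow> prime_elem \<pi>"
    using field_poly_prod_mset_prime_factorization[OF c]
      field_poly_in_prime_factorization_imp_prime by blast
  have "P \<noteq> {#}"
  proof
    assume "P = {#}"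
    hence "degree (smult (inverse (lead_coeff c)) c) = 0" using P(1) by simp
    with assms c show False by simp
  qed
  then obtain \<pi> where \<pi>: "\<pi> \<in># P" by blast
  have "\<pi> dvd smult (inverse (lead_coeff c)) c" using P(1) \<pi> by (metis dvd_prod_mset)
  hence "\<pi> dvd c" using c by (simp add: dvd_smult_cancel)
  thus thesis using that P(2)[OF \<pi>] by blast
qed

lemma prime_const_dvd_mult_poly:
  fixes G H :: "'a::field poly poly"
  assumes "prime_elem \<pi>" "[:\<pi>:] dvd G * H"
  obtains d1 d2 G0 H0 where "d1 * d2 = \<pi>" "G = smult d1 G0" "H = smult d2 H0"
proof -
  have "[:\<pi>:] dvd G \<or> [:\<pi>:] dvd H"
    using lift_prime_elem_poly[OF assms(1)] assms(2) by (simp only: prime_elem_dvd_mult_iff)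
  thus thesis
  proof (elim disjE dvdE)
    fix G0 assume "G = [:\<pi>:] * G0"
    thus thesis using that[of \<pi> 1 G0 H] by simp
  next
    fix H0 assume "H = [:\<pi>:] * H0"
    thus thesis using that[of 1 \<pi> G H0] by simp
  qed
qed

text \<open>Gauss's lemma over \<open>K[x]\<close>, by induction over the prime factors of \<open>c\<close>.\<close>
lemma const_factor_split:
  fixes A G H :: "'a::field poly poly"
  assumes "c \<noteq> 0" "[:c:] * A = G * H"
  shows "\<exists>c1 c2 G' H'. c1 \<noteq> 0 \<and> c2 \<noteq> 0 \<and> G = smult c1 G' \<and> H = smult c2 H' \<and> A = G' * H'"
  using assms
proof (induction "degree c" arbitrary: c G H rule: less_induct)
  case (less c G H)
  show ?case
  proof (cases "degree c = 0")
    case True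
    then obtain k where k: "c = [:k:]" "k \<noteq> 0" using less.prems(1) by (auto elim!: degree_eq_zeroE)
    have "A = smult [:inverse k:] ([:c:] * A)" using k by (simp add: smult_smult flip: one_pCons)
    also have "\<dots> = G * smult [:inverse k:] H" by (simp only: less.prems(2) mult_smult_right)
    finally have "A = G * smult [:inverse k:] H" .
    moreover have "H = smult c (smult [:inverse k:] H)" using k by (simp add: smult_smult flip: one_pCons)
    ultimately show ?thesis
      using less.prems(1) by (intro exI[of _ 1] exI[of _ c] exI[of _ G] exI[of _ "smult [:inverse k:] H"]) auto
  next
    case False
    hence "degree c > 0" by simp
    then obtain \<pi> where \<pi>: "prime_elem \<pi>" "\<pi> dvd c" by (rule prime_factor_of_nonconst_poly)
    then obtain c' where c': "c = \<pi> * c'" by (elim dvdE)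
    have \<pi>0: "\<pi> \<noteq> 0" and c'0: "c' \<noteq> 0" using \<pi>(1) c' less.prems(1) by auto
    have "degree \<pi> \<noteq> 0" using \<pi>(1) is_unit_iff_degree[OF \<pi>0] by (auto simp: prime_elem_def)
    hence deg: "degree c' < degree c" using c' \<pi>0 c'0 by (simp add: degree_mult_eq)
    have GH: "G * H = [:\<pi>:] * ([:c':] * A)" using less.prems(2) c' by (simp add: mult_ac)
    have "[:\<pi>:] dvd G * H" unfolding GH by (rule dvd_triv_left)
    then obtain d1 d2 G0 H0 where d: "d1 * d2 = \<pi>" "G = smult d1 G0" "H = smult d2 H0"
      by (rule prime_const_dvd_mult_poly[OF \<pi>(1)])
    have "smult \<pi> ([:c':] * A) = G * H" using GH by (simp add: mult.commute)
    also have "\<dots> = smult \<pi> (G0 * H0)"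
      using d by (simp add: mult_smult_left mult_smult_right smult_smult mult.commute)
    finally have "[:c':] * A = G0 * H0" by (rule smult_cancel[OF \<pi>0])
    then obtain c1 c2 G' H' where "c1 \<noteq> 0" "c2 \<noteq> 0" "G0 = smult c1 G'" "H0 = smult c2 H'" "A = G' * H'"
      using less.hyps[OF deg c'0] by blast
    thus ?thesis using d \<pi>0 by (intro exI[of _ "d1 * c1"] exI[of _ "d2 * c2"]) (auto simp: smult_smult)
  qed
qed

lemma fract_poly_clear_denominators:
  fixes G :: "'a::idom fract poly"
  shows "\<exists>c G0. c \<noteq> 0 \<and> fract_poly G0 = smult (to_fract c) G"
proof (induction G)
  case (pCons g G)
  then obtain c G0 where cG: "c \<noteq> 0" "fract_poly G0 = smult (to_fract c) G" by blast
  obtain u v where g: "g = Fract u v" "v \<noteq> 0" by (cases g) auto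
  have "to_fract (u * c) = to_fract (v * c) * g" using g
    by (simp add: to_fract_def mult_fract eq_fract mult_ac)
  moreover have "fract_poly (smult v G0) = smult (to_fract (v * c)) G"
    using cG(2) by (simp add: smult_smult mult_ac)
  ultimately have "fract_poly (pCons (u * c) (smult v G0)) = smult (to_fract (v * c)) (pCons g G)"
    by (simp add: map_poly_pCons)
  thus ?case using cG g by (metis mult_eq_0_iff)
qed (intro exI[of _ 1] exI[of _ 0], simp)

lemma irreducible_fract_poly:
  fixes p :: "'a::field poly poly"
  assumes irr: "irreducible p" and dp: "degree p > 0"
  shows "irreducible (fract_poly p)"
proof (rule irreducibleI)
  show "fract_poly p \<noteq> 0" using dp by auto
  show "\<not> is_unit (fract_poly p)" using dp by (subst is_unit_iff_degree) (auto simp: degree_map_poly)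
  fix a b assume ab: "fract_poly p = a * b"
  show "is_unit a \<or> is_unit b"
  proof (rule ccontr)
    assume "\<not> (is_unit a \<or> is_unit b)"
    moreover have "a \<noteq> 0" "b \<noteq> 0" using ab dp by auto
    ultimately have da: "degree a > 0" and db: "degree b > 0"
      by (auto simp: is_unit_iff_degree)
    obtain c1 a0 where a0: "c1 \<noteq> 0" "fract_poly a0 = smult (to_fract c1) a"
      using fract_poly_clear_denominators by blast
    obtain c2 b0 where b0: "c2 \<noteq> 0" "fract_poly b0 = smult (to_fract c2) b"
      using fract_poly_clear_denominators by blast
    have "fract_poly ([:c1 * c2:] * p) = fract_poly (a0 * b0)"
      by (simp add: a0(2) b0(2) ab mult_ac)
    hence "[:c1 * c2:] * p = a0 * b0" by (simp only: fract_poly_eq_iff)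
    moreover have "c1 * c2 \<noteq> 0" using a0(1) b0(1) by simp
    ultimately obtain d1 d2 G H where "d1 \<noteq> 0" "d2 \<noteq> 0" "a0 = smult d1 G" "b0 = smult d2 H" "p = G * H"
      using const_factor_split by blast
    moreover have "degree a0 = degree a" "degree b0 = degree b"
      using arg_cong[OF a0(2), of degree] arg_cong[OF b0(2), of degree] a0(1) b0(1)
      by (simp_all add: degree_map_poly)
    ultimately have "p = G * H" "degree G > 0" "degree H > 0" using da db by auto
    moreover have "is_unit G \<or> is_unit H" using irreducibleD[OF irr \<open>p = G * H\<close>] .
    ultimately show False by (auto simp: is_unit_poly_iff)
  qed
qed

lemma dvd_if_fract_poly_dvd:
  fixes p C :: "'a::field poly poly"
  assumes irr: "irreducible p" and dp: "degree p > 0" and dvd: "fract_poly p dvd fract_poly C"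
  shows "p dvd C"
proof -
  obtain g where g: "fract_poly C = fract_poly p * g" using dvd by (elim dvdE)
  obtain c g0 where cg: "c \<noteq> 0" "fract_poly g0 = smult (to_fract c) g"
    using fract_poly_clear_denominators by blast
  have "fract_poly ([:c:] * C) = fract_poly (p * g0)" by (simp add: g cg(2) mult_ac)
  hence "[:c:] * C = p * g0" by (simp only: fract_poly_eq_iff)
  then obtain c1 c2 G H where c1: "c1 \<noteq> 0" "p = smult c1 G" and "C = G * H"
    using const_factor_split[OF cg(1)] by blast
  hence "G dvd C" by simp
  have "is_unit [:c1:] \<or> is_unit G" using irreducibleD[OF irr, of "[:c1:]" G] c1(2) by simp
  moreover have "degree G > 0" using dp c1 by simp
  hence "\<not> is_unit G" by (auto simp: is_unit_poly_iff)
  ultimately have "is_unit [:c1:]" by blast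
  hence "[:c1:] * G dvd G" using mult_unit_dvd_iff[of "[:c1:]" G G] by simp
  hence "p dvd G" using c1(2) by simp
  thus ?thesis using \<open>G dvd C\<close> by (rule dvd_trans)
qed

lemma irreducible_imp_prime_elem_poly_poly:
  fixes p :: "'a::field poly poly"
  assumes irr: "irreducible p" and dp: "degree p > 0"
  shows "prime_elem p"
proof (rule prime_elemI)
  show "p \<noteq> 0" using dp by auto
  show "\<not> is_unit p" using irreducible_not_unit[OF irr] .
  fix A B assume "p dvd A * B"
  hence "fract_poly p dvd fract_poly A * fract_poly B"
    by (metis fract_poly_dvd fract_poly_mult)
  hence "fract_poly p dvd fract_poly A \<or> fract_poly p dvd fract_poly B"
    using field_poly_irreducible_imp_prime[OF irreducible_fract_poly[OF irr dp]]
    by (simp add: prime_elem_dvd_mult_iff)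
  thus "p dvd A \<or> p dvd B" using dvd_if_fract_poly_dvd[OF irr dp] by blast
qed

lemma eval2_eq_poly_eval1: "eval2 q X Y = poly (map_poly (\<lambda>c. eval1 c X) q) Y"
  by (simp add: eval2_def eval1_def)

lemma eval1_hom:
  "(\<lambda>c. eval1 c X) 0 = 0"
  "\<And>a b. (\<lambda>c. eval1 c X) (a + b) = (\<lambda>c. eval1 c X) a + (\<lambda>c. eval1 c X) b"
  "\<And>a b. (\<lambda>c. eval1 c X) (a * b) = (\<lambda>c. eval1 c X) a * (\<lambda>c. eval1 c X) b"
  "\<And>a b. (\<lambda>c. eval1 c X) (a - b) = (\<lambda>c. eval1 c X) a - (\<lambda>c. eval1 c X) b"
  by (simp_all add: eval1_0 eval1_add eval1_mult eval1_diff)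

lemma eval2_add: "eval2 (A + B) X Y = eval2 A X Y + eval2 B X Y"
  unfolding eval2_eq_poly_eval1 by (subst map_poly_hom_add[OF eval1_hom(1,2)]) (rule poly_add)

lemma eval2_diff: "eval2 (A - B) X Y = eval2 A X Y - eval2 B X Y"
  unfolding eval2_eq_poly_eval1 by (subst map_poly_hom_diff[OF eval1_hom(1,4)]) (rule poly_diff)

lemma eval2_mult: "eval2 (A * B) X Y = eval2 A X Y * eval2 B X Y"
  unfolding eval2_eq_poly_eval1 by (subst map_poly_hom_mult[OF eval1_hom(1,2,3)]) (rule poly_mult)

lemma eval2_const: "eval2 [:w:] X Y = eval1 w X"
  unfolding eval2_eq_poly_eval1 by (simp add: map_poly_pCons eval1_0)

lemma eval2_smult: "eval2 (smult w A) X Y = eval1 w X * eval2 A X Y"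
proof -
  have "smult w A = [:w:] * A" by simp
  thus ?thesis by (simp only: eval2_mult eval2_const)
qed

lemma degree_pos_if_eval2_zero:
  assumes "D \<noteq> 0" "eval2 D X Y = 0" "fls_transcendental X"
  shows "degree D > 0"
proof (rule ccontr)
  assume "\<not> degree D > 0"
  then obtain w where "D = [:w:]" by (auto elim: degree_eq_zeroE)
  thus False using assms by (simp add: eval2_const fls_transcendental_def)
qed

lemma eval2_pseudo_mod_zero:
  fixes A B :: "'a::field poly poly"
  assumes "B \<noteq> 0" "pseudo_divmod A B = (q, r)" "eval2 A X Y = 0" "eval2 B X Y = 0"
  shows "eval2 r X Y = 0"
proof -
  have "smult (lead_coeff B ^ (Suc (degree A) - degree B)) A = B * q + r"
    using pseudo_divmod(1)[OF assms(1,2)] by simp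
  from arg_cong[OF this, of "\<lambda>P. eval2 P X Y"] show ?thesis
    using assms(3,4) by (simp add: eval2_smult eval2_add eval2_mult)
qed

text \<open>Otherwise pseudo-divide \<open>p\<close> by a vanishing polynomial of least degree and use that \<open>p\<close>
  is prime.\<close>
lemma eval2_zero_degree_ge:
  fixes p D :: "'a::field poly poly"
  assumes p: "prime_elem p" and pz: "eval2 p X Y = 0" and X: "fls_transcendental X"
    and D: "D \<noteq> 0" "eval2 D X Y = 0"
  shows "degree p \<le> degree D"
proof (rule ccontr)
  assume "\<not> degree p \<le> degree D"
  define Q where "Q n \<longleftrightarrow> (\<exists>D. D \<noteq> 0 \<and> eval2 D X Y = 0 \<and> degree D = n)" for n
  obtain n where n: "Q n" "\<And>k. Q k \<Longrightarrow> n \<le> k"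
    using ex_has_least_nat[of Q "degree D" id] D by (auto simp: Q_def)
  obtain D0 where D0: "D0 \<noteq> 0" "eval2 D0 X Y = 0" "degree D0 = n" using n(1) by (auto simp: Q_def)
  have "degree D0 \<le> degree D" using n(2)[of "degree D"] D D0(3) by (auto simp: Q_def)
  hence less: "degree D0 < degree p" using \<open>\<not> degree p \<le> degree D\<close> by simp
  obtain q r where qr: "pseudo_divmod p D0 = (q, r)" by (cases "pseudo_divmod p D0") auto
  have "r = 0"
  proof (rule ccontr)
    assume "r \<noteq> 0"
    hence "Q (degree r)" using eval2_pseudo_mod_zero[OF D0(1) qr pz D0(2)] by (auto simp: Q_def)
    hence "degree D0 \<le> degree r" using n(2) D0(3) by simp
    thus False using pseudo_divmod(2)[OF D0(1) qr] \<open>r \<noteq> 0\<close> by simp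
  qed
  define c where "c = lead_coeff D0 ^ (Suc (degree p) - degree D0)"
  have c: "c \<noteq> 0" using D0(1) by (simp add: c_def)
  have eq: "D0 * q = p * [:c:]"
    using pseudo_divmod(1)[OF D0(1) qr] \<open>r = 0\<close> by (simp add: c_def mult.commute)
  have "\<not> p dvd D0"
  proof
    assume "p dvd D0"
    hence "degree p \<le> degree D0" by (rule dvd_imp_degree_le[OF _ D0(1)])
    thus False using less by simp
  qed
  moreover have "p dvd D0 * q" unfolding eq by (rule dvd_triv_left)
  ultimately have "p dvd q" using prime_elem_dvd_mult_iff[OF p] by blast
  then obtain q2 where "q = p * q2" by (elim dvdE)
  hence "p * (D0 * q2) = p * [:c:]" using eq by (simp add: mult_ac)
  moreover have "p \<noteq> 0" using p by auto
  ultimately have eq2: "D0 * q2 = [:c:]" using mult_left_cancel[of p "D0 * q2" "[:c:]"] by blast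
  hence "q2 \<noteq> 0" using c by auto
  hence "degree D0 + degree q2 = 0" using degree_mult_eq[OF D0(1), of q2] eq2 by simp
  thus False using degree_pos_if_eval2_zero[OF D0(1,2) X] by simp
qed

lemma eval2_nonzero_if_not_dvd:
  fixes p b :: "'a::field poly poly"
  assumes p: "prime_elem p" and pz: "eval2 p X Y = 0" and X: "fls_transcendental X"
    and nd: "\<not> p dvd b"
  shows "eval2 b X Y \<noteq> 0"
proof
  assume bz: "eval2 b X Y = 0"
  have p0: "p \<noteq> 0" using p by auto
  have dp: "degree p > 0" using degree_pos_if_eval2_zero[OF p0 pz X] .
  obtain q r where qr: "pseudo_divmod b p = (q, r)" by (cases "pseudo_divmod b p") auto
  have "r = 0"
  proof (rule ccontr)
    assume "r \<noteq> 0"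
    moreover have "eval2 r X Y = 0" by (rule eval2_pseudo_mod_zero[OF p0 qr bz pz])
    ultimately have "degree p \<le> degree r" by (rule eval2_zero_degree_ge[OF p pz X])
    thus False using pseudo_divmod(2)[OF p0 qr] \<open>r \<noteq> 0\<close> by simp
  qed
  define c where "c = lead_coeff p ^ (Suc (degree b) - degree p)"
  have "[:c:] * b = p * q" using pseudo_divmod(1)[OF p0 qr] \<open>r = 0\<close> by (simp add: c_def)
  hence "p dvd [:c:] * b" by (simp only: dvd_triv_left)
  moreover have "\<not> p dvd [:c:]"
  proof
    assume "p dvd [:c:]"
    moreover have "[:c:] \<noteq> 0" using p0 by (simp add: c_def)
    ultimately have "degree p \<le> degree [:c:]" by (rule dvd_imp_degree_le)
    thus False using dp by simp
  qed
  ultimately show False using nd prime_elem_dvd_mult_iff[OF p] by blast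
qed

section \<open>Branches of the curve through a point\<close>

lemma degree_coeff_le_deg_x: "degree (coeff p j) \<le> deg_x p"
proof (cases "j \<le> degree p")
  case True
  thus ?thesis unfolding deg_x_def by (intro Max_ge) auto
next
  case False
  thus ?thesis by (simp add: coeff_eq_0)
qed

lemma deg_x_attained:
  assumes "\<exists>i. degree (coeff p i) > 0"
  shows "deg_x p > 0 \<and> (\<exists>j. degree (coeff p j) = deg_x p)"
proof -
  obtain i where i: "degree (coeff p i) > 0" using assms by blast
  have pos: "deg_x p > 0" using degree_coeff_le_deg_x[of p i] i by simp
  have "deg_x p \<in> insert 0 ((\<lambda>j. degree (coeff p j)) ` {..degree p})"
    unfolding deg_x_def by (intro Max_in) auto
  thus ?thesis using pos by auto
qed

text \<open>The value at the point \<open>s\<close> of \<open>P\<^sup>1\<close> of the degree-\<open>d\<close> homogenisation of \<open>w\<close>; at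
  infinity this is the coefficient of \<open>x^d\<close>.\<close>
definition homog_eval :: "nat \<Rightarrow> 'a::field option \<Rightarrow> 'a poly \<Rightarrow> 'a" where
  "homog_eval d s w = (case s of Some c \<Rightarrow> poly w c | None \<Rightarrow> coeff w d)"

lemma homog_eval_0 [simp]: "homog_eval d s 0 = 0"
  by (simp add: homog_eval_def split: option.split)

lemma sum_homogeneous_eq_homog_eval:
  fixes w :: "'a::field poly"
  assumes "degree w \<le> d"
  shows "(\<Sum>i\<le>d. coeff w i * snd (hom s) ^ i * fst (hom s) ^ (d - i)) = homog_eval d s w"
proof (cases s)
  case None
  have "(\<Sum>i\<le>d. coeff w i * snd (hom s) ^ i * fst (hom s) ^ (d - i))
      = (\<Sum>i\<le>d. if i = d then coeff w i else 0)"
    by (intro sum.cong) (auto simp: None hom_def)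
  thus ?thesis by (simp add: None homog_eval_def)
next
  case (Some c)
  have "(\<Sum>i\<le>d. coeff w i * snd (hom s) ^ i * fst (hom s) ^ (d - i)) = (\<Sum>i\<le>d. coeff w i * c ^ i)"
    by (simp add: Some hom_def)
  also have "\<dots> = poly w c" using assms
    by (simp add: poly_altdef) (intro sum.mono_neutral_right, auto simp: coeff_eq_0)
  finally show ?thesis by (simp add: Some homog_eval_def)
qed

lemma bihom_eval_eq:
  fixes p :: "'a::field poly poly"
  shows "bihom_eval p (hom s1) (hom s2) =
    homog_eval (degree p) s2 (map_poly (homog_eval (deg_x p) s1) p)"
proof -
  have "bihom_eval p (hom s1) (hom s2) =
     (\<Sum>j\<le>degree p. (\<Sum>i\<le>deg_x p. coeff (coeff p j) i * snd (hom s1) ^ i * fst (hom s1) ^ (deg_x p - i))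
        * (snd (hom s2) ^ j * fst (hom s2) ^ (degree p - j)))"
    unfolding bihom_eval_def by (simp add: sum_distrib_right sum_distrib_left mult_ac)
  also have "\<dots> = (\<Sum>j\<le>degree p. coeff (map_poly (homog_eval (deg_x p) s1) p) j
      * snd (hom s2) ^ j * fst (hom s2) ^ (degree p - j))"
    by (intro sum.cong refl)
      (simp add: sum_homogeneous_eq_homog_eval[OF degree_coeff_le_deg_x] coeff_map_poly)
  also have "\<dots> = homog_eval (degree p) s2 (map_poly (homog_eval (deg_x p) s1) p)"
    by (rule sum_homogeneous_eq_homog_eval[OF map_poly_degree_leq])
  finally show ?thesis .
qed

text \<open>\<open>w\<close> in the local coordinate \<open>t\<close> at \<open>s\<close>: \<open>w(c + t)\<close> at \<open>s = c\<close>, and \<open>t^d w(1/t)\<close>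
  at infinity.\<close>
definition local_poly :: "nat \<Rightarrow> 'a::field option \<Rightarrow> 'a poly \<Rightarrow> 'a poly" where
  "local_poly d s w = (case s of Some c \<Rightarrow> pcompose w [:c, 1:] | None \<Rightarrow> pad_reflect d w)"

lemma local_poly_0: "local_poly d s 0 = 0"
  by (simp add: local_poly_def pad_reflect_def split: option.split)

lemma local_poly_add: "local_poly d s (a + b) = local_poly d s a + local_poly d s b"
  by (cases s) (simp_all add: local_poly_def pcompose_add, rule poly_eqI, simp add: coeff_pad_reflect)

lemma local_poly_smult: "local_poly d s (smult k a) = smult k (local_poly d s a)"
  by (cases s) (simp_all add: local_poly_def pcompose_smult, rule poly_eqI, simp add: coeff_pad_reflect)

lemma local_poly_eq_0:
  assumes "degree w \<le> d" "local_poly d s w = 0"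
  shows "w = 0"
proof (cases s)
  case (Some c)
  thus ?thesis using assms by (simp add: local_poly_def pcompose_eq_0_iff)
next
  case None
  show ?thesis
  proof (rule ccontr)
    assume "w \<noteq> 0"
    have "coeff (pad_reflect d w) (d - degree w) = coeff w (degree w)" using assms(1) by (simp add: coeff_pad_reflect)
    thus False using assms \<open>w \<noteq> 0\<close> None by (simp add: local_poly_def)
  qed
qed

lemma coeff_0_local_poly: "coeff (local_poly d s w) 0 = homog_eval d s w"
proof (cases s)
  case None thus ?thesis by (simp add: local_poly_def homog_eval_def coeff_pad_reflect)
next
  case (Some c)
  have "coeff (pcompose w [:c, 1:]) 0 = poly (pcompose w [:c, 1:]) 0" by (simp add: poly_0_coeff_0)
  thus ?thesis by (simp add: Some local_poly_def homog_eval_def poly_pcompose)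
qed

lemma poly_map_poly_linear_const:
  fixes T :: "'a::field poly \<Rightarrow> 'a poly"
  assumes T0: "T 0 = 0" and Tadd: "\<And>a b. T (a + b) = T a + T b" and Tsm: "\<And>k a. T (smult k a) = smult k (T a)"
  shows "poly (map_poly T P) [:k:] = T (poly P [:k:])"
proof (induction P)
  case 0 thus ?case by (simp add: T0)
next
  case (pCons a P)
  have "poly (map_poly T (pCons a P)) [:k:] = T a + smult k (poly (map_poly T P) [:k:])"
    by (simp add: map_poly_pCons T0)
  also have "\<dots> = T (a + smult k (poly P [:k:]))" by (simp add: pCons Tadd Tsm)
  finally show ?case by simp
qed

lemma degree_poly_const_le:
  fixes P :: "'a::field poly poly"
  assumes "\<And>j. degree (coeff P j) \<le> d"
  shows "degree (poly P [:k:]) \<le> d"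
  using assms
proof (induction P)
  case 0 thus ?case by simp
next
  case (pCons a P)
  have "degree (coeff P j) \<le> d" for j using pCons(3)[of "Suc j"] by simp
  hence "degree (poly P [:k:]) \<le> d" by (rule pCons(2))
  moreover have "degree a \<le> d" using pCons(3)[of 0] by simp
  ultimately show ?case by (simp add: degree_add_le order.trans[OF degree_smult_le])
qed

lemma eval1_moeb_inv_inverse:
  fixes x' :: "'a::field fls"
  assumes x: "x' \<noteq> 0" and dw: "degree w \<le> d"
  shows "eval1 w (moeb_inv s (inverse x')) = (case s of Some _ \<Rightarrow> 1 | None \<Rightarrow> inverse x' ^ d) * eval1 (local_poly d s w) x'"
proof (cases s)
  case (Some c)
  have lin: "poly (map_poly fls_const [:c, 1:]) x' = fls_const c + x'"
    by (simp add: map_poly_pCons fls_const_0 fls_const_1)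
  have "eval1 w (moeb_inv s (inverse x')) = poly (map_poly fls_const w) (poly (map_poly fls_const [:c, 1:]) x')"
    by (simp add: Some moeb_inv_def eval1_def lin)
  also have "\<dots> = poly (map_poly fls_const (pcompose w [:c, 1:])) x'"
    by (simp add: poly_pcompose map_poly_hom_pcompose[OF fls_const_hom(1,3,4)])
  finally show ?thesis by (simp add: Some local_poly_def eval1_def)
next
  case None
  have dm: "degree (map_poly fls_const w) \<le> d" using dw by (simp add: degree_map_poly)
  have "eval1 w (moeb_inv s (inverse x')) = poly (map_poly fls_const w) (inverse x')"
    by (simp add: None moeb_inv_def eval1_def)
  also have "\<dots> = inverse x' ^ d * poly (pad_reflect d (map_poly fls_const w)) x'"
    by (rule poly_pad_reflect[OF x dm])
  finally show ?thesis by (simp add: None local_poly_def eval1_def map_poly_pad_reflect fls_const_0)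
qed

definition local_poly_y :: "nat \<Rightarrow> 'a::field option \<Rightarrow> 'a poly poly \<Rightarrow> 'a poly poly" where
  "local_poly_y d s P = (case s of Some c \<Rightarrow> pcompose P [:[:c:], 1:] | None \<Rightarrow> pad_reflect d P)"

lemma eval2_moeb_inv_y:
  fixes y' :: "'a::field fls"
  assumes y: "y' \<noteq> 0" and dP: "degree P \<le> d"
  shows "eval2 P x' (moeb_inv s (inverse y')) = (case s of Some _ \<Rightarrow> 1 | None \<Rightarrow> inverse y' ^ d) * eval2 (local_poly_y d s P) x' y'"
proof (cases s)
  case (Some c)
  have lin: "poly (map_poly (\<lambda>w. eval1 w x') [:[:c:], 1:]) y' = fls_const c + y'"
    by (simp add: map_poly_pCons eval1_0 eval1_const eval1_1)
  have "eval2 P x' (moeb_inv s (inverse y')) = poly (map_poly (\<lambda>w. eval1 w x') P) (poly (map_poly (\<lambda>w. eval1 w x') [:[:c:], 1:]) y')"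
    by (simp add: Some moeb_inv_def eval2_eq_poly_eval1 lin)
  also have "\<dots> = poly (map_poly (\<lambda>w. eval1 w x') (pcompose P [:[:c:], 1:])) y'"
    by (simp add: poly_pcompose map_poly_hom_pcompose[OF eval1_hom(1,2,3)])
  finally show ?thesis by (simp add: Some local_poly_y_def eval2_eq_poly_eval1)
next
  case None
  have dm: "degree (map_poly (\<lambda>w. eval1 w x') P) \<le> d"
    using order.trans[OF map_poly_degree_leq dP] .
  have "eval2 P x' (moeb_inv s (inverse y')) = poly (map_poly (\<lambda>w. eval1 w x') P) (inverse y')"
    by (simp add: None moeb_inv_def eval2_eq_poly_eval1)
  also have "\<dots> = inverse y' ^ d * poly (pad_reflect d (map_poly (\<lambda>w. eval1 w x') P)) y'"
    by (rule poly_pad_reflect[OF y dm])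
  finally show ?thesis by (simp add: None local_poly_y_def eval2_eq_poly_eval1 map_poly_pad_reflect eval1_0)
qed

lemma eval2_moeb_inv_x:
  fixes p :: "'a::field poly poly"
  assumes x: "x' \<noteq> 0"
  shows "eval2 p (moeb_inv s (inverse x')) Y =
    (case s of Some _ \<Rightarrow> 1 | None \<Rightarrow> inverse x' ^ deg_x p) * eval2 (map_poly (local_poly (deg_x p) s) p) x' Y"
proof -
  define u where "u = (case s of Some _ \<Rightarrow> 1 | None \<Rightarrow> inverse x' ^ deg_x p)"
  have "map_poly (\<lambda>w. eval1 w (moeb_inv s (inverse x'))) p =
        smult u (map_poly (\<lambda>w. eval1 w x') (map_poly (local_poly (deg_x p) s) p))"
    by (intro poly_eqI) (simp add: coeff_map_poly eval1_0 local_poly_0 eval1_moeb_inv_inverse[OF x degree_coeff_le_deg_x] u_def)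
  thus ?thesis by (simp add: eval2_eq_poly_eval1 u_def)
qed

lemma eval1_fps_to_fls: "eval1 w (fps_to_fls Z) = fps_to_fls (poly (map_poly fps_const w) Z)"
  by (induction w) (simp_all add: eval1_def map_poly_pCons fps_to_fls_plus fls_times_fps_to_fls fps_const_to_fls fls_const_0)

lemma fps_of_poly_compose_X_power:
  assumes "n > 0"
  shows "fps_of_poly (w :: 'a::field poly) oo fps_X ^ n = poly (map_poly fps_const w) (fps_X ^ n)"
proof (induction w)
  case 0 thus ?case by simp
next
  case (pCons a w)
  have X: "fps_X oo (fps_X ^ n :: 'a fps) = fps_X ^ n" by (rule fps_X_fps_compose_startby0) (use assms in simp)
  show ?case using assms
    by (simp add: fps_of_poly_pCons fps_compose_add_distrib fps_compose_mult_distrib X pCons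
        map_poly_pCons mult.commute)
qed

lemma eval2_fps_to_fls:
  fixes P :: "'a::field poly poly"
  assumes "n > 0"
  shows "eval2 P (fps_to_fls (fps_X ^ n)) (fps_to_fls y) =
         fps_to_fls (poly (map_poly (\<lambda>q. q oo fps_X ^ n) (map_poly fps_of_poly P)) y)"
proof (induction P)
  case 0 thus ?case by (simp add: eval2_eq_poly_eval1)
next
  case (pCons a P)
  have "eval2 (pCons a P) (fps_to_fls (fps_X ^ n)) (fps_to_fls y)
      = eval1 a (fps_to_fls (fps_X ^ n)) + fps_to_fls y * eval2 P (fps_to_fls (fps_X ^ n)) (fps_to_fls y)"
    by (simp add: eval2_eq_poly_eval1 map_poly_pCons eval1_0)
  also have "\<dots> = fps_to_fls (fps_of_poly a oo fps_X ^ n) + fps_to_fls y * fps_to_fls (poly (map_poly (\<lambda>q. q oo fps_X ^ n) (map_poly fps_of_poly P)) y)"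
    by (simp add: eval1_fps_to_fls fps_of_poly_compose_X_power[OF assms] pCons)
  also have "\<dots> = fps_to_fls (poly (map_poly (\<lambda>q. q oo fps_X ^ n) (map_poly fps_of_poly (pCons a P))) y)"
    by (simp add: map_poly_pCons fps_to_fls_plus fls_times_fps_to_fls)
  finally show ?case .
qed

lemma irreducible_coeffs_no_common_root:
  fixes p :: "'a::field poly poly"
  assumes irr: "irreducible p" and dp: "degree p > 0"
  shows "\<exists>j. poly (coeff p j) c \<noteq> 0"
proof (rule ccontr)
  assume "\<not> (\<exists>j. poly (coeff p j) c \<noteq> 0)"
  define a where "a = [:-c, 1:]"
  have z: "\<And>j. a dvd coeff p j"
    using \<open>\<not> (\<exists>j. poly (coeff p j) c \<noteq> 0)\<close> by (simp add: a_def poly_eq_0_iff_dvd)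
  define p' where "p' = map_poly (\<lambda>w. w div a) p"
  have pp: "p = [:a:] * p'"
  proof (rule poly_eqI)
    fix j
    have "coeff ([:a:] * p') j = a * (coeff p j div a)" by (simp add: p'_def coeff_map_poly)
    also have "\<dots> = coeff p j" by (rule dvd_mult_div_cancel[OF z])
    finally show "coeff p j = coeff ([:a:] * p') j" by simp
  qed
  have "is_unit [:a:] \<or> is_unit p'" by (rule irreducibleD[OF irr pp])
  moreover have "\<not> is_unit [:a:]" by (simp add: a_def is_unit_const_poly_iff is_unit_iff_degree)
  ultimately have "is_unit p'" by blast
  hence "degree p' = 0" by (auto simp: is_unit_poly_iff)
  hence "degree p = 0" using pp by (simp add: degree_mult_le)
  thus False using dp by simp
qed

lemma irreducible_no_const_root:
  fixes p :: "'a::field poly poly"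
  assumes irr: "irreducible p" and dxp: "\<exists>i. degree (coeff p i) > 0"
  shows "poly p [:c:] \<noteq> 0"
proof
  assume "poly p [:c:] = 0"
  hence "[:-[:c:], 1:] dvd p" by (simp add: poly_eq_0_iff_dvd)
  then obtain q where q: "p = [:-[:c:], 1:] * q" by (elim dvdE)
  have "is_unit [:-[:c:], 1:] \<or> is_unit q" by (rule irreducibleD[OF irr q])
  moreover have "\<not> is_unit [:-[:c:], 1:]" by (auto simp: is_unit_poly_iff)
  ultimately have "is_unit q" by blast
  then obtain k where k: "q = [:k:]" "is_unit k" by (auto simp: is_unit_poly_iff)
  then obtain \<kappa> where kk: "k = [:\<kappa>:]" by (auto simp: is_unit_poly_iff)
  have "degree (coeff p i) = 0" for i
    using q k kk by (auto simp: coeff_pCons split: nat.splits)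
  thus False using dxp by simp
qed

lemma coeff_0_hom:
  "(\<lambda>w::'a::field poly. coeff w 0) 0 = 0"
  "\<And>a b. (\<lambda>w::'a::field poly. coeff w 0) (a + b) = coeff a 0 + coeff b 0"
  "\<And>a b. (\<lambda>w::'a::field poly. coeff w 0) (a * b) = coeff a 0 * coeff b 0"
  by (simp_all flip: poly_0_coeff_0 add: poly_mult)

text \<open>\<open>p\<close> in local coordinates centred at \<open>Q\<close>, which becomes the origin.\<close>
definition local_bipoly :: "'a::field poly poly \<Rightarrow> 'a option \<times> 'a option \<Rightarrow> 'a poly poly" where
  "local_bipoly p Q = local_poly_y (degree p) (snd Q) (map_poly (local_poly (deg_x p) (fst Q)) p)"

lemma eval2_moeb_inv_local_bipoly:
  assumes x: "x' \<noteq> 0" and y: "y' \<noteq> 0" and z: "eval2 (local_bipoly p Q) x' y' = 0"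
  shows "eval2 p (moeb_inv (fst Q) (inverse x')) (moeb_inv (snd Q) (inverse y')) = 0"
proof -
  let ?p1 = "map_poly (local_poly (deg_x p) (fst Q)) p"
  have "eval2 p (moeb_inv (fst Q) (inverse x')) (moeb_inv (snd Q) (inverse y')) =
      (case fst Q of Some _ \<Rightarrow> 1 | None \<Rightarrow> inverse x' ^ deg_x p) * eval2 ?p1 x' (moeb_inv (snd Q) (inverse y'))"
    by (rule eval2_moeb_inv_x[OF x])
  also have "eval2 ?p1 x' (moeb_inv (snd Q) (inverse y')) =
      (case snd Q of Some _ \<Rightarrow> 1 | None \<Rightarrow> inverse y' ^ degree p) * eval2 (local_bipoly p Q) x' y'"
    unfolding local_bipoly_def by (rule eval2_moeb_inv_y[OF y map_poly_degree_leq])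
  finally show ?thesis using z by simp
qed

lemma coeff_0_local_bipoly:
  fixes p :: "'a::field poly poly"
  assumes irr: "irreducible p" and dp: "degree p > 0" and dxp: "\<exists>i. degree (coeff p i) > 0"
  shows "coeff (local_bipoly p Q) 0 \<noteq> 0"
proof -
  obtain s1 s2 where Q: "Q = (s1, s2)" by (cases Q)
  define p1 where "p1 = map_poly (local_poly (deg_x p) s1) p"
  have lin: "local_poly (deg_x p) s1 0 = 0" by (simp add: local_poly_0)
  show ?thesis
  proof (cases s2)
    case None
    have "coeff (local_bipoly p Q) 0 = local_poly (deg_x p) s1 (lead_coeff p)"
      by (simp add: local_bipoly_def Q None local_poly_y_def coeff_pad_reflect coeff_map_poly lin)
    moreover have "lead_coeff p \<noteq> 0" using dp by auto
    ultimately show ?thesis using local_poly_eq_0[OF degree_coeff_le_deg_x] by metis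
  next
    case (Some c)
    have "coeff (local_bipoly p Q) 0 = poly p1 [:c:]"
      by (simp add: local_bipoly_def Q Some local_poly_y_def p1_def poly_pcompose flip: poly_0_coeff_0)
    also have "\<dots> = local_poly (deg_x p) s1 (poly p [:c:])" unfolding p1_def
      by (rule poly_map_poly_linear_const) (simp_all add: local_poly_0 local_poly_add local_poly_smult)
    finally have eq: "coeff (local_bipoly p Q) 0 = local_poly (deg_x p) s1 (poly p [:c:])" .
    have "degree (poly p [:c:]) \<le> deg_x p" by (rule degree_poly_const_le) (rule degree_coeff_le_deg_x)
    moreover have "poly p [:c:] \<noteq> 0" by (rule irreducible_no_const_root[OF irr dxp])
    ultimately show ?thesis using eq local_poly_eq_0 by metis
  qed
qed

lemma local_bipoly_mod_x:
  "map_poly (\<lambda>w. coeff w 0) (local_bipoly p Q) =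
     local_poly (degree p) (snd Q) (map_poly (homog_eval (deg_x p) (fst Q)) p)"
proof -
  have red: "map_poly (\<lambda>w. coeff w 0) (map_poly (local_poly (deg_x p) (fst Q)) p)
      = map_poly (homog_eval (deg_x p) (fst Q)) p"
    by (intro poly_eqI) (simp add: coeff_map_poly local_poly_0 coeff_0_local_poly)
  show ?thesis
  proof (cases "snd Q")
    case None
    thus ?thesis using red
      by (simp add: local_bipoly_def local_poly_y_def local_poly_def map_poly_pad_reflect)
  next
    case (Some c)
    have "map_poly (\<lambda>w::'a poly. coeff w 0) [:[:c:], 1:] = [:c, 1:]" by (simp add: map_poly_pCons)
    thus ?thesis using red
      by (simp add: local_bipoly_def local_poly_y_def local_poly_def Some
          map_poly_hom_pcompose[OF coeff_0_hom])
  qed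
qed

lemma map_poly_homog_eval_nonzero:
  fixes p :: "'a::field poly poly"
  assumes irr: "irreducible p" and dp: "degree p > 0" and dxp: "\<exists>i. degree (coeff p i) > 0"
  shows "map_poly (homog_eval (deg_x p) s) p \<noteq> 0"
proof (cases s)
  case None
  obtain j where j: "degree (coeff p j) = deg_x p" "deg_x p > 0" using deg_x_attained[OF dxp] by blast
  hence "coeff p j \<noteq> 0" by auto
  hence "coeff (coeff p j) (deg_x p) \<noteq> 0" using j(1) by (metis leading_coeff_0_iff)
  hence "coeff (map_poly (homog_eval (deg_x p) s) p) j \<noteq> 0"
    by (simp add: coeff_map_poly homog_eval_def None)
  thus ?thesis by auto
next
  case (Some c)
  obtain j where "poly (coeff p j) c \<noteq> 0" using irreducible_coeffs_no_common_root[OF irr dp] by blast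
  hence "coeff (map_poly (homog_eval (deg_x p) s) p) j \<noteq> 0"
    by (simp add: coeff_map_poly homog_eval_def Some)
  thus ?thesis by auto
qed

text \<open>The reduction modulo \<open>x\<close> of the local polynomial vanishes at \<open>0\<close> exactly because \<open>Q\<close>
  lies on the curve.\<close>
lemma local_bipoly_at_origin:
  fixes p :: "'a::field poly poly"
  assumes irr: "irreducible p" and dp: "degree p > 0" and dxp: "\<exists>i. degree (coeff p i) > 0"
    and Q: "Q \<in> curve p"
  shows "map_poly (\<lambda>w. coeff w 0) (local_bipoly p Q) \<noteq> 0"
    "poly (map_poly (\<lambda>w. coeff w 0) (local_bipoly p Q)) 0 = 0"
proof -
  define L where "L = map_poly (homog_eval (deg_x p) (fst Q)) p"
  have "L \<noteq> 0" unfolding L_def by (rule map_poly_homog_eval_nonzero[OF irr dp dxp])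
  moreover have "degree L \<le> degree p" by (simp add: L_def map_poly_degree_leq)
  ultimately show "map_poly (\<lambda>w. coeff w 0) (local_bipoly p Q) \<noteq> 0"
    using local_bipoly_mod_x local_poly_eq_0 unfolding L_def by metis
  have "homog_eval (degree p) (snd Q) L = 0"
    using Q bihom_eval_eq[of p "fst Q" "snd Q"] by (simp add: curve_def L_def split: prod.splits)
  thus "poly (map_poly (\<lambda>w. coeff w 0) (local_bipoly p Q)) 0 = 0"
    by (simp add: local_bipoly_mod_x poly_0_coeff_0 coeff_0_local_poly L_def)
qed

lemma fps_poly_at_0_fps_of_poly: "fps_poly_at_0 (map_poly fps_of_poly P) = map_poly (\<lambda>w. coeff w 0) P"
  by (intro poly_eqI) (simp add: coeff_fps_poly_at_0 coeff_map_poly)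

text \<open>A Puiseux root of \<open>p\<close> in local coordinates at \<open>Q\<close> gives a branch through \<open>Q\<close>.\<close>
lemma branch_exists:
  fixes p :: "'a::field_char_0 poly poly"
  assumes ac: "alg_closed TYPE('a)" and irr: "irreducible p" and dp: "degree p > 0"
    and dxp: "\<exists>i. degree (coeff p i) > 0" and Q: "Q \<in> curve p"
  obtains n \<psi> where "n > 0" "fls_subdegree \<psi> < 0" "\<psi> \<noteq> 0"
    "eval2 p (moeb_inv (fst Q) (inverse (fls_X ^ n))) (moeb_inv (snd Q) \<psi>) = 0"
proof -
  define F where "F = map_poly fps_of_poly (local_bipoly p Q)"
  have F0: "fps_poly_at_0 F \<noteq> 0" "poly (fps_poly_at_0 F) 0 = 0"
    using local_bipoly_at_origin[OF irr dp dxp Q] by (simp_all add: F_def fps_poly_at_0_fps_of_poly)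
  hence "order 0 (fps_poly_at_0 F) > 0" using order_root by blast
  then obtain n y where "puiseux_root F n y" using puiseux_root_exists[OF ac F0(1)] by blast
  hence n: "n > 0" and y0: "y $ 0 = 0" and root: "poly (map_poly (\<lambda>q. q oo fps_X ^ n) F) y = 0"
    by (auto simp: puiseux_root_def)
  have "y \<noteq> 0"
  proof
    assume "y = 0"
    hence "coeff F 0 oo fps_X ^ n = 0" using root by (simp add: poly_0_coeff_0 coeff_map_poly)
    hence "coeff (local_bipoly p Q) 0 = 0"
      using n by (simp add: F_def coeff_map_poly fps_compose_eq_0_iff)
    thus False using coeff_0_local_bipoly[OF irr dp dxp] by blast
  qed
  hence sub: "fls_subdegree (inverse (fps_to_fls y)) < 0"
    using y0 by (simp add: fls_inverse_subdegree fls_subdegree_fls_to_fps subdegree_pos_iff)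
  have "eval2 (local_bipoly p Q) (fps_to_fls (fps_X ^ n)) (fps_to_fls y) = fps_to_fls 0"
    unfolding eval2_fps_to_fls[OF n] root[unfolded F_def] ..
  hence "eval2 (local_bipoly p Q) (fls_X ^ n) (fps_to_fls y) = 0"
    by (simp add: fps_to_fls_power fps_X_to_fls)
  hence "eval2 p (moeb_inv (fst Q) (inverse (fls_X ^ n))) (moeb_inv (snd Q) (inverse (fps_to_fls y))) = 0"
    using \<open>y \<noteq> 0\<close> by (intro eval2_moeb_inv_local_bipoly) simp_all
  from that[OF n sub _ this] show thesis using \<open>y \<noteq> 0\<close> by simp
qed

section \<open>Poles along a branch\<close>

lemma eval2_const_x: "eval2 (const_x u) X Y = eval1 u X"
  by (simp add: const_x_def eval2_const)

lemma eval2_const_y: "eval2 (const_y u) X Y = eval1 u Y"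
proof -
  have "map_poly (\<lambda>c. eval1 c X) (map_poly (\<lambda>c. [:c:]) u) = map_poly fls_const u"
    by (intro poly_eqI) (simp add: coeff_map_poly eval1_const eval1_0)
  thus ?thesis by (simp add: const_y_def eval2_eq_poly_eval1 eval1_def)
qed

lemma emb_x_Fract: "\<exists>u v. v \<noteq> 0 \<and> f = Fract u v \<and> emb_x f = Fract (const_x u) (const_x v)"
proof -
  obtain u v where "f = Fract u v" "v \<noteq> 0" by (cases f) auto
  hence "\<exists>R u v. v \<noteq> 0 \<and> f = Fract u v \<and> R = Fract (const_x u) (const_x v)" by blast
  from someI_ex[OF this] show ?thesis unfolding emb_x_def by blast
qed

lemma emb_y_Fract: "\<exists>u v. v \<noteq> 0 \<and> g = Fract u v \<and> emb_y g = Fract (const_y u) (const_y v)"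
proof -
  obtain u v where "g = Fract u v" "v \<noteq> 0" by (cases g) auto
  hence "\<exists>R u v. v \<noteq> 0 \<and> g = Fract u v \<and> R = Fract (const_y u) (const_y v)" by blast
  from someI_ex[OF this] show ?thesis unfolding emb_y_def by blast
qed

lemma eval2_numerator_zero_if_multiple:
  assumes eq: "Fract A B = Fract A1 B1 * Fract p 1" and nz: "B \<noteq> 0" "B1 \<noteq> 0"
    and ev: "eval2 B1 X Y \<noteq> 0" and pz: "eval2 p X Y = 0"
  shows "eval2 A X Y = 0"
proof -
  have "A * B1 = A1 * p * B" using eq nz by (simp add: eq_fract mult_fract)
  from arg_cong[OF this, of "\<lambda>P. eval2 P X Y"] have "eval2 A X Y * eval2 B1 X Y = 0"
    by (simp add: eval2_mult pz)
  thus ?thesis using ev by simp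
qed

text \<open>On a branch \<open>(X, Y)\<close> of the curve, the relation \<open>f - g \<in> r + \<langle>p\<rangle>\<close> becomes an identity of
  Laurent series, all denominators being nonzero there since \<open>p\<close> is prime and divides none of
  them.\<close>
lemma eval_on_branch:
  fixes p :: "'a::field poly poly"
  assumes p: "prime_elem p" and pz: "eval2 p X Y = 0"
    and X: "fls_transcendental X" and Y: "fls_transcendental Y"
    and FF: "(f, g) \<in> FF r p" and r: "r = Fract a b" "b \<noteq> 0" "\<not> p dvd b"
  shows "eval2 b X Y \<noteq> 0" "eval2 a X Y / eval2 b X Y = eval_fract f X - eval_fract g Y"
proof -
  show b: "eval2 b X Y \<noteq> 0" by (rule eval2_nonzero_if_not_dvd[OF p pz X r(3)])
  obtain u v where f: "v \<noteq> 0" "f = Fract u v" "emb_x f = Fract (const_x u) (const_x v)"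
    using emb_x_Fract by blast
  obtain u' v' where g: "v' \<noteq> 0" "g = Fract u' v'" "emb_y g = Fract (const_y u') (const_y v')"
    using emb_y_Fract by blast
  obtain a1 b1 where q: "b1 \<noteq> 0" "\<not> p dvd b1"
    "emb_x f - emb_y g - r = Fract a1 b1 * Fract p 1"
    using FF by (auto simp: FF_def ideal_loc_def loc_def)
  have v: "eval1 v X \<noteq> 0" "eval1 v' Y \<noteq> 0"
    using X Y f(1) g(1) by (auto simp: fls_transcendental_def)
  have cv: "const_x v \<noteq> 0" "const_y v' \<noteq> 0"
    using f(1) g(1) by (simp_all add: const_x_def const_y_def map_poly_eq_0_iff)
  define N where "N = const_x u * const_y v' * b - const_y u' * const_x v * b - a * const_x v * const_y v'"
  have "Fract N (const_x v * const_y v' * b) = Fract a1 b1 * Fract p 1"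
    using q(3) f(3) g(3) r(1,2) cv by (simp add: N_def diff_fract right_diff_distrib mult_ac)
  hence "eval2 N X Y = 0"
    by (rule eval2_numerator_zero_if_multiple)
      (use cv r(2) q(1) eval2_nonzero_if_not_dvd[OF p pz X q(2)] pz in simp_all)
  hence "eval1 u X * eval1 v' Y * eval2 b X Y - eval1 u' Y * eval1 v X * eval2 b X Y
      - eval2 a X Y * eval1 v X * eval1 v' Y = 0"
    by (simp add: N_def eval2_mult eval2_diff eval2_const_x eval2_const_y)
  hence "eval2 a X Y / eval2 b X Y = eval1 u X / eval1 v X - eval1 u' Y / eval1 v' Y"
    using v b by (simp add: field_simps)
  thus "eval2 a X Y / eval2 b X Y = eval_fract f X - eval_fract g Y"
    using eval_fract_Fract[OF X f(1,2)] eval_fract_Fract[OF Y g(1,2)] by simp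
qed

text \<open>Because \<open>r(X, Y) = f(X) - g(Y)\<close> on a branch \<open>(X, Y)\<close> through \<open>Q\<close>.\<close>
lemma is_pole_r_if_single_pole:
  fixes p :: "'a::field_char_0 poly poly"
  assumes ac: "alg_closed TYPE('a)" and irr: "irreducible p" and dp: "degree p > 0"
    and dxp: "\<exists>i. degree (coeff p i) > 0"
    and r: "r \<in> loc p" and FF: "(f, g) \<in> FF r p" and Q: "Q \<in> curve p"
    and single: "is_pole_1 f (fst Q) \<noteq> is_pole_1 g (snd Q)"
  shows "is_pole_r p r Q"
proof -
  obtain n \<psi> where n: "n > 0" and \<psi>: "fls_subdegree \<psi> < 0" "\<psi> \<noteq> 0"
    and pz: "eval2 p (moeb_inv (fst Q) (inverse (fls_X ^ n))) (moeb_inv (snd Q) \<psi>) = 0"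
    using branch_exists[OF ac irr dp dxp Q] by blast
  obtain a b where ab: "r = Fract a b" "b \<noteq> 0" "\<not> p dvd b" using r by (auto simp: loc_def)
  define \<phi> where "\<phi> = (inverse (fls_X ^ n) :: 'a fls)"
  define X where "X = moeb_inv (fst Q) \<phi>"
  define Y where "Y = moeb_inv (snd Q) \<psi>"
  have \<phi>: "fls_subdegree \<phi> < 0" using n by (simp add: \<phi>_def fls_inverse_subdegree)
  have eval: "eval2 b X Y \<noteq> 0" "eval2 a X Y / eval2 b X Y = eval_fract f X - eval_fract g Y"
    using eval_on_branch[OF irreducible_imp_prime_elem_poly_poly[OF irr dp] _ _ _ FF ab]
      fls_transcendental_moeb_inv[OF \<phi>] fls_transcendental_moeb_inv[OF \<psi>(1)] pz
    by (simp_all add: X_def Y_def \<phi>_def)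
  have "fls_subdegree (eval_fract f X - eval_fract g Y) < 0"
    using single is_pole_1_iff_subdegree[OF \<phi>, of f "fst Q"] is_pole_1_iff_subdegree[OF \<psi>(1), of g "snd Q"]
    by (intro fls_subdegree_diff_neg) (simp add: X_def Y_def)
  thus ?thesis unfolding is_pole_r_def Let_def using Q n \<psi> pz ab(1,2) eval
    by (intro conjI exI[of _ n] exI[of _ \<psi>] exI[of _ a] exI[of _ b]) (auto simp: X_def Y_def \<phi>_def)
qed

lemma orbit_subset_curve:
  assumes "P \<in> curve p"
  shows "orbit p P \<subseteq> curve p"
proof
  fix Q assume "Q \<in> orbit p P"
  hence "(P, Q) \<in> (orbit_rel p)\<^sup>*" by (simp add: orbit_def)
  thus "Q \<in> curve p" using assms by (induction rule: rtrancl_induct) (auto simp: orbit_rel_def)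
qed

lemma orbit_subset_Times:
  assumes AB: "\<And>Q. Q \<in> orbit p P \<Longrightarrow> A (fst Q) \<longleftrightarrow> B (snd Q)" and P: "A (fst P)"
  shows "orbit p P \<subseteq> Collect A \<times> Collect B"
proof
  fix Q assume Q: "Q \<in> orbit p P"
  have "(P, Q) \<in> (orbit_rel p)\<^sup>*" using Q by (simp add: orbit_def)
  hence "A (fst Q)"
  proof (induction rule: rtrancl_induct)
    case (step y z)
    hence "y \<in> orbit p P" "z \<in> orbit p P" by (auto simp: orbit_def intro: rtrancl_into_rtrancl)
    hence "A (fst y) \<longleftrightarrow> B (snd y)" "A (fst z) \<longleftrightarrow> B (snd z)" using AB by blast+
    moreover have "fst y = fst z \<or> snd y = snd z" using step(2) by (simp add: orbit_rel_def)
    ultimately show ?case using step.IH by auto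
  qed (use P in simp)
  thus "Q \<in> Collect A \<times> Collect B" using AB[OF Q] by (cases Q) simp
qed

theorem proposition8:
  fixes p :: "'a::field_char_0 poly poly"
    and r :: "'a poly poly fract"
    and f g :: "'a poly fract"
    and P0 :: "'a option \<times> 'a option"
  assumes "alg_closed TYPE('a)"
    and "irreducible p"
    and "degree p > 0"
    and "\<exists>i. degree (coeff p i) > 0"
    and "F_trivial p"
    and "r \<in> loc p - ideal_loc p"
    and "(f, g) \<in> FF r p"
    and "is_pole_r p r P0"
    and "infinite (orbit p P0)"
  shows "\<exists>Q\<in>orbit p P0. is_pole_r p r Q \<and> (\<not> is_pole_1 f (fst Q) \<or> \<not> is_pole_1 g (snd Q))"
proof (rule ccontr)
  assume "\<not> ?thesis"
  hence both: "is_pole_1 f (fst Q) \<and> is_pole_1 g (snd Q)"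
    if "Q \<in> orbit p P0" "is_pole_r p r Q" for Q
    using that by blast
  have P0: "P0 \<in> curve p" using assms(8) by (simp add: is_pole_r_def)
  have "is_pole_1 f (fst Q) \<longleftrightarrow> is_pole_1 g (snd Q)" if Q: "Q \<in> orbit p P0" for Q
    using both[OF Q] is_pole_r_if_single_pole[OF assms(1-4) _ assms(7)] assms(6)
      orbit_subset_curve[OF P0] Q by blast
  moreover have "is_pole_1 f (fst P0)" using both[OF _ assms(8)] by (simp add: orbit_def)
  ultimately have "orbit p P0 \<subseteq> {s. is_pole_1 f s} \<times> {s. is_pole_1 g s}"
    by (rule orbit_subset_Times)
  moreover have "finite ({s. is_pole_1 f s} \<times> {s. is_pole_1 g s})"
    using finite_is_pole_1 by blast
  ultimately show False using assms(9) finite_subset by blast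
qed

end
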